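(* Let $X$ be a BMC with kernel $\mathcal P$ and initial distribution $\nu$. Assume Assumptions (F) and (F3) hold with $\alpha\in(1/\sqrt2,1)$. Then for all $j\in J$ and $f\in F$, the sequence $(M_{n,j}(f),n\in\mathbb N)$ defined by $$M_{n,j}(f)=(2\alpha_j)^{-n}M_{\mathbb G_n}(\mathcal R_j(f))$$ is a martingale with respect to the filtration $\mathcal H_n=\sigma(X_i,i\in\mathbb T_n)$, and it converges a.s. and in $L^2$ to a random variable $M_{\infty,j}(f)$.
   Context: Let $(S,\mathscr S)$ be a measurable space. Let $\mathbb G_0=\{\emptyset\}$, $\mathbb G_k=\{0,1\}^k$ (words of length $k$), $\mathbb T_n=\bigcup_{r=0}^n\mathbb G_r$, $\mathbb T=\bigcup_{r\ge0}\mathbb G_r$. Let $\mathcal P$ be a probability kernel from $S$ to $S^2$ and $\nu$ a probability measure on $S$. For $g:S^3\to\mathbb R$, $\mathcal Pg(x)=\int g(x,y,z)\mathcal P(x,dy,dz)$, and for $h:S^2\to\mathbb C$, $\mathcal Ph(x)=\int h(y,z)\mathcal P(x,dy,dz)$. A BMC with initial distribution $\nu$ and kernel $\mathcal P$ is a process $X=(X_i,i\in\mathbb T)$ with $X_\emptyset\sim\nu$ such that for all $k\ge0$ and bounded measurable $g_i:S^3\to\mathbb R$, $\mathbb E[\prod_{i\in\mathbb G_k}g_i(X_i,X_{i0},X_{i1})\mid\sigma(X_j,j\in\mathbb T_k)]=\prod_{i\in\mathbb G_k}\mathcal Pg_i(X_i)$. Let $\mathcal Q(x,A)=\frac12(\mathcal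 P(x,A\times S)+\mathcal P(x,S\times A))$, $\mathcal Qf(x)=\int f(y)\mathcal Q(x,dy)$, $\mathcal Q^n$ its iterates, extended linearly to complex functions. Notation: $(f\otimes g)(x,y)=f(x)g(y)$, $\langle\mu,f\rangle=\int f\,d\mu$, $M_A(f)=\sum_{i\in A}f(X_i)$. Assumption (F): $F$ is a set of real measurable functions on $S$ such that (i) $F$ is a vector space containing the constants; (ii) $f\in F\Rightarrow f^2\in F$; (iii) $F\subset L^1(\nu)$; (iv) for all $f_0,f_1\in F$ and $x\in S$, $f_0\otimes f_1\in L^1(\mathcal P(x,\cdot))$ and $\mathcal P(f_0\otimes f_1)\in F$. Assumption (F3): there exist a probability measure $\mu$ on $S$ (invariant for $\mathcal Q$) with $F\subset L^1(\mu)$, $\alpha\in(0,1)$, a finite nonempty index set $J$, distinct complex eigenvalues $\alpha_j$, $j\in J$, of $\mathcal Q$ with $|\alpha_j|=\alpha$, nonzero complex projectors $\mathcal R_j$ defined on $\mathbb CF$ (the complex span of $F$), mapping $\mathbb CF$ into itself, $\mathcal R_j$ being the projector on the eigenspace of $\alpha_j$ (so $\mathcal Q\mathcal R_jf=\alpha_j\mathcal R_jf$), with $\mathcal R_j\circ\mathcal R_{j'}=0$ for $j\ne j'$, and a non-increasing sequence $(\beta_n)$ with $0<\beta_n\le1$, $\beta_n\to0$, such that for all $f\in F$ there exists $g\in F$ with, writing $\theta_j=\alpha_j/\alpha$, $|\mathcal Q^nf-\langle\mu,f\rangle-\alpha^n\sum_{j\in J}\theta_j^n\mathcal R_j(f)|\le\beta_n\alpha^ng$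 for all $n$. *)

theory Defs
  imports "HOL-Probability.Probability"
begin

text \<open>Vertices of the binary tree are words over {0,1}, encoded as bool lists
  (False = 0, True = 1). The children of i are i0 = i @ [False], i1 = i @ [True].\<close>

definition Gen :: "nat \<Rightarrow> bool list set" where
  "Gen k = {w. length w = k}"

definition Tn :: "nat \<Rightarrow> bool list set" where
  "Tn n = {w. length w \<le> n}"

definition Pop3 :: "('s \<Rightarrow> ('s \<times> 's) measure) \<Rightarrow> ('s \<Rightarrow> 's \<Rightarrow> 's \<Rightarrow> real) \<Rightarrow> 's \<Rightarrow> real" where
  "Pop3 P g x = (\<integral>yz. g x (fst yz) (snd yz) \<partial>P x)"

definition Ptens :: "('s \<Rightarrow> ('s \<times> 's) measure) \<Rightarrow> ('s \<Rightarrow> real) \<Rightarrow> ('s \<Rightarrow> real) \<Rightarrow> 's \<Rightarrow> real" where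
  "Ptens P f0 f1 x = (\<integral>yz. f0 (fst yz) * f1 (snd yz) \<partial>P x)"

text \<open>The mean kernel Q(x,A) = (P(x,A x S) + P(x,S x A))/2 acting on complex functions
  (Q f(x) = integral f dQ(x,.)); real functions are acted on via the embedding into complex.\<close>
definition Qop :: "('s \<Rightarrow> ('s \<times> 's) measure) \<Rightarrow> ('s \<Rightarrow> complex) \<Rightarrow> 's \<Rightarrow> complex" where
  "Qop P h x = ((\<integral>yz. h (fst yz) \<partial>P x) + (\<integral>yz. h (snd yz) \<partial>P x)) / 2"

definition CF :: "('s \<Rightarrow> real) set \<Rightarrow> ('s \<Rightarrow> complex) set" where
  "CF F = {h. (\<lambda>x. Re (h x)) \<in> F \<and> (\<lambda>x. Im (h x)) \<in> F}"

definition Hfilt :: "'w measure \<Rightarrow> 's measure \<Rightarrow> (bool list \<Rightarrow> 'w \<Rightarrow> 's) \<Rightarrow> nat \<Rightarrow> 'w measure" where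
  "Hfilt Pr M X n = sigma (space Pr) (\<Union>j\<in>Tn n. {X j -` A \<inter> space Pr | A. A \<in> sets M})"

definition BMC :: "'w measure \<Rightarrow> 's measure \<Rightarrow> ('s \<Rightarrow> ('s \<times> 's) measure) \<Rightarrow> 's measure
    \<Rightarrow> (bool list \<Rightarrow> 'w \<Rightarrow> 's) \<Rightarrow> bool" where
  "BMC Pr M P \<nu> X \<longleftrightarrow>
     prob_space Pr \<and>
     P \<in> M \<rightarrow>\<^sub>M prob_algebra (M \<Otimes>\<^sub>M M) \<and>
     prob_space \<nu> \<and> sets \<nu> = sets M \<and>
     (\<forall>i. X i \<in> Pr \<rightarrow>\<^sub>M M) \<and>
     distr Pr M (X []) = \<nu> \<and>
     (\<forall>k (g :: bool list \<Rightarrow> 's \<Rightarrow> 's \<Rightarrow> 's \<Rightarrow> real).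
        (\<forall>i\<in>Gen k. (\<lambda>(x, y, z). g i x y z) \<in> borel_measurable (M \<Otimes>\<^sub>M M \<Otimes>\<^sub>M M) \<and>
                    (\<exists>B. \<forall>x\<in>space M. \<forall>y\<in>space M. \<forall>z\<in>space M. \<bar>g i x y z\<bar> \<le> B)) \<longrightarrow>
        (AE \<omega> in Pr.
           real_cond_exp Pr (Hfilt Pr M X k)
             (\<lambda>\<omega>. \<Prod>i\<in>Gen k. g i (X i \<omega>) (X (i @ [False]) \<omega>) (X (i @ [True]) \<omega>)) \<omega>
           = (\<Prod>i\<in>Gen k. Pop3 P (g i) (X i \<omega>))))"

definition assmF :: "'s measure \<Rightarrow> ('s \<Rightarrow> ('s \<times> 's) measure) \<Rightarrow> 's measure \<Rightarrow> ('s \<Rightarrow> real) set \<Rightarrow> bool" where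
  "assmF M P \<nu> F \<longleftrightarrow>
     F \<subseteq> borel_measurable M \<and>
     (\<forall>c. (\<lambda>_. c) \<in> F) \<and>
     (\<forall>f\<in>F. \<forall>g\<in>F. (\<lambda>x. f x + g x) \<in> F) \<and>
     (\<forall>c. \<forall>f\<in>F. (\<lambda>x. c * f x) \<in> F) \<and>
     (\<forall>f\<in>F. (\<lambda>x. (f x)\<^sup>2) \<in> F) \<and>
     (\<forall>f\<in>F. integrable \<nu> f) \<and>
     (\<forall>f0\<in>F. \<forall>f1\<in>F.
        (\<forall>x\<in>space M. integrable (P x) (\<lambda>yz. f0 (fst yz) * f1 (snd yz))) \<and>
        Ptens P f0 f1 \<in> F)"

text \<open>Assumption (F3) with data mu, alpha, J, the eigenvalues alpha_j (alj), the projectors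
  R_j, and the sequence beta.\<close>
definition assmF3 :: "'s measure \<Rightarrow> ('s \<Rightarrow> ('s \<times> 's) measure) \<Rightarrow> ('s \<Rightarrow> real) set \<Rightarrow>
    's measure \<Rightarrow> real \<Rightarrow> 'j set \<Rightarrow> ('j \<Rightarrow> complex) \<Rightarrow>
    ('j \<Rightarrow> ('s \<Rightarrow> complex) \<Rightarrow> ('s \<Rightarrow> complex)) \<Rightarrow> (nat \<Rightarrow> real) \<Rightarrow> bool" where
  "assmF3 M P F \<mu> \<alpha> J alj R \<beta> \<longleftrightarrow>
     prob_space \<mu> \<and> sets \<mu> = sets M \<and>
     (\<forall>A\<in>sets M. (\<integral>x. (measure (P x) (A \<times> space M) + measure (P x) (space M \<times> A)) / 2 \<partial>\<mu>)
                  = measure \<mu> A) \<and>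
     (\<forall>f\<in>F. integrable \<mu> f) \<and>
     0 < \<alpha> \<and> \<alpha> < 1 \<and>
     finite J \<and> J \<noteq> {} \<and> inj_on alj J \<and> (\<forall>j\<in>J. cmod (alj j) = \<alpha>) \<and>
     (\<forall>j\<in>J.
        (\<forall>h\<in>CF F. R j h \<in> CF F) \<and>
        (\<forall>h1\<in>CF F. \<forall>h2\<in>CF F. \<forall>x\<in>space M. R j (\<lambda>y. h1 y + h2 y) x = R j h1 x + R j h2 x) \<and>
        (\<forall>c. \<forall>h\<in>CF F. \<forall>x\<in>space M. R j (\<lambda>y. c * h y) x = c * R j h x) \<and>
        (\<forall>h\<in>CF F. \<forall>x\<in>space M. R j (R j h) x = R j h x) \<and>
        (\<exists>h\<in>CF F. \<exists>x\<in>space M. R j h x \<noteq> 0) \<and>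
        (\<forall>h\<in>CF F. \<forall>x\<in>space M. Qop P (R j h) x = alj j * R j h x)) \<and>
     (\<forall>j\<in>J. \<forall>j'\<in>J. j \<noteq> j' \<longrightarrow> (\<forall>h\<in>CF F. \<forall>x\<in>space M. R j (R j' h) x = 0)) \<and>
     antimono \<beta> \<and> (\<forall>n. 0 < \<beta> n \<and> \<beta> n \<le> 1) \<and> \<beta> \<longlonglongrightarrow> 0 \<and>
     (\<forall>f\<in>F. \<exists>g\<in>F. \<forall>n. \<forall>x\<in>space M.
        cmod ((Qop P ^^ n) (\<lambda>y. complex_of_real (f y)) x - complex_of_real (integral\<^sup>L \<mu> f)
              - complex_of_real (\<alpha> ^ n) *
                  (\<Sum>j\<in>J. (alj j / complex_of_real \<alpha>) ^ n * R j (\<lambda>y. complex_of_real (f y)) x))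
        \<le> \<beta> n * \<alpha> ^ n * g x)"

definition cmartingale :: "'w measure \<Rightarrow> (nat \<Rightarrow> 'w measure) \<Rightarrow> (nat \<Rightarrow> 'w \<Rightarrow> complex) \<Rightarrow> bool" where
  "cmartingale Pr H Z \<longleftrightarrow>
     (\<forall>n. subalgebra Pr (H n) \<and> sets (H n) \<subseteq> sets (H (Suc n))) \<and>
     (\<forall>n. Z n \<in> borel_measurable (H n) \<and> integrable Pr (Z n)) \<and>
     (\<forall>n. AE \<omega> in Pr. real_cond_exp Pr (H n) (\<lambda>\<omega>. Re (Z (Suc n) \<omega>)) \<omega> = Re (Z n \<omega>)) \<and>
     (\<forall>n. AE \<omega> in Pr. real_cond_exp Pr (H n) (\<lambda>\<omega>. Im (Z (Suc n) \<omega>)) \<omega> = Im (Z n \<omega>))"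

definition conv_as_L2 :: "'w measure \<Rightarrow> (nat \<Rightarrow> 'w \<Rightarrow> complex) \<Rightarrow> ('w \<Rightarrow> complex) \<Rightarrow> bool" where
  "conv_as_L2 Pr Z Zinf \<longleftrightarrow>
     Zinf \<in> borel_measurable Pr \<and>
     integrable Pr (\<lambda>\<omega>. (cmod (Zinf \<omega>))\<^sup>2) \<and>
     (AE \<omega> in Pr. (\<lambda>n. Z n \<omega>) \<longlonglongrightarrow> Zinf \<omega>) \<and>
     (\<forall>n. integrable Pr (\<lambda>\<omega>. (cmod (Z n \<omega> - Zinf \<omega>))\<^sup>2)) \<and>
     (\<lambda>n. \<integral>\<omega>. (cmod (Z n \<omega> - Zinf \<omega>))\<^sup>2 \<partial>Pr) \<longlonglongrightarrow> 0"

definition Mnj :: "(bool list \<Rightarrow> 'w \<Rightarrow> 's) \<Rightarrow> ('j \<Rightarrow> complex) \<Rightarrow>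
    ('j \<Rightarrow> ('s \<Rightarrow> complex) \<Rightarrow> ('s \<Rightarrow> complex)) \<Rightarrow> 'j \<Rightarrow> ('s \<Rightarrow> real) \<Rightarrow> nat \<Rightarrow> 'w \<Rightarrow> complex" where
  "Mnj X alj R j f n \<omega> =
     inverse ((2 * alj j) ^ n) * (\<Sum>i\<in>Gen n. R j (\<lambda>y. complex_of_real (f y)) (X i \<omega>))"

end

theory Submission
  imports Defs
begin

text \<open>
  Write h = R_j(f) and c = \<alpha>_j, so that Q h = c h. By the branching property the conditional
  mean of h(X_i0) + h(X_i1) given H_n is 2 (Q h)(X_i) = 2 c h(X_i) for every vertex i of generation n,
  hence (2c)^-n times the sum of h(X_i) over generation n is a martingale. Its increment is
  (2c)^-(n+1) times the sum over generation n of the innovations h(X_i0) + h(X_i1) - 2 c h(X_i);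
  these are centred, and orthogonal because the offspring of distinct vertices are conditionally
  independent. So the second moment of the increment is at most a constant times (4\<alpha>^2)^-n times
  the expected sums of |h|^2 over generations n and n+1, that is 2^n \<nu>Q^n|h|^2 and
  2^(n+1) \<nu>Q^(n+1)|h|^2, and \<nu>Q^n|h|^2 is bounded by (F3). For \<alpha> > 1/sqrt 2 the increments therefore decay
  geometrically in L^2, which yields convergence almost surely and in L^2. The branching property
  is only assumed for bounded functions; truncation extends it to the integrable ones that occur.
\<close>

lemma Gen_0: "Gen 0 = {[]}"
  by (auto simp: Gen_def)

lemma Gen_Suc: "Gen (Suc n) = (\<lambda>a. a @ [False]) ` Gen n \<union> (\<lambda>a. a @ [True]) ` Gen n"
proof (intro equalityI subsetI)
  fix w assume "w \<in> Gen (Suc n)"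
  then have len: "length w = Suc n" by (simp add: Gen_def)
  then have "w = butlast w @ [last w]"
    by (metis append_butlast_last_id list.size(3) nat.distinct(1))
  moreover have "butlast w \<in> Gen n" using len by (simp add: Gen_def)
  ultimately show "w \<in> (\<lambda>a. a @ [False]) ` Gen n \<union> (\<lambda>a. a @ [True]) ` Gen n"
    by (cases "last w") auto
qed (auto simp: Gen_def)

lemma finite_Gen: "finite (Gen n)"
proof -
  have "Gen n = {xs. set xs \<subseteq> UNIV \<and> length xs = n}" by (auto simp: Gen_def)
  then show ?thesis using finite_lists_length_eq[of "UNIV :: bool set" n] by simp
qed

lemma sum_Gen_Suc: "(\<Sum>i\<in>Gen (Suc n). g i) = (\<Sum>a\<in>Gen n. g (a @ [False]) + g (a @ [True]))"
proof -
  have "inj_on (\<lambda>a. a @ [b]) (Gen n)" for b by (auto simp: inj_on_def)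
  then show ?thesis
    unfolding Gen_Suc
    by (subst sum.union_disjoint) (auto simp: finite_Gen sum.reindex sum.distrib)
qed

lemma Gen_subset_Tn: "Gen n \<subseteq> Tn n"
  by (auto simp: Gen_def Tn_def)

section \<open>Truncation\<close>

definition trunc :: "nat \<Rightarrow> real \<Rightarrow> real" where
  "trunc n t = max (- real n) (min (real n) t)"

lemma abs_trunc_le: "\<bar>trunc n t\<bar> \<le> \<bar>t\<bar>"
  by (auto simp: trunc_def)

lemma abs_trunc_le_index: "\<bar>trunc n t\<bar> \<le> real n"
  by (auto simp: trunc_def)

lemma trunc_le: "0 \<le> t \<Longrightarrow> trunc n t \<le> t"
  by (auto simp: trunc_def)

lemma mono_trunc: "0 \<le> t \<Longrightarrow> mono (\<lambda>n. trunc n t)"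
  by (auto simp: mono_def trunc_def)

lemma trunc_tendsto: "(\<lambda>n. trunc n t) \<longlonglongrightarrow> t"
proof (rule tendsto_eventually)
  obtain N :: nat where "\<bar>t\<bar> \<le> real N" using real_arch_simple by blast
  then show "\<forall>\<^sub>F n in sequentially. trunc n t = t"
    unfolding eventually_sequentially by (intro exI[of _ N]) (auto simp: trunc_def)
qed

lemma borel_measurable_trunc[measurable]:
  assumes [measurable]: "f \<in> borel_measurable M"
  shows "(\<lambda>x. trunc n (f x)) \<in> borel_measurable M"
  unfolding trunc_def by measurable

lemma measurable_trunc3:
  assumes "(\<lambda>(x, y, z). g x y z) \<in> borel_measurable N"
  shows "(\<lambda>(x, y, z). trunc n (g x y z)) \<in> borel_measurable N"
proof -
  have "(\<lambda>(x, y, z). trunc n (g x y z)) = (\<lambda>p. trunc n ((\<lambda>(x, y, z). g x y z) p))"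
    by (auto simp: fun_eq_iff)
  then show ?thesis using borel_measurable_trunc[OF assms] by simp
qed

lemma (in finite_measure) integrable_trunc:
  "f \<in> borel_measurable M \<Longrightarrow> integrable M (\<lambda>x. trunc n (f x))"
  by (rule integrable_const_bound[where B="real n"]) (auto simp: abs_trunc_le_index)

lemma (in finite_measure) integrable_of_bounded_trunc_integrals:
  fixes f :: "'a \<Rightarrow> real"
  assumes f: "f \<in> borel_measurable M" and nonneg: "\<And>x. 0 \<le> f x"
    and bound: "\<And>n. (\<integral>x. trunc n (f x) \<partial>M) \<le> C"
  shows "integrable M f"
proof -
  have "incseq (\<lambda>n. \<integral>x. trunc n (f x) \<partial>M)"
    unfolding incseq_def
    by (auto intro!: integral_mono integrable_trunc f monoD[OF mono_trunc] nonneg)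
  then have lim: "(\<lambda>n. \<integral>x. trunc n (f x) \<partial>M) \<longlonglongrightarrow> (SUP n. \<integral>x. trunc n (f x) \<partial>M)"
    by (rule LIMSEQ_incseq_SUP[rotated]) (use bound in \<open>auto intro!: bdd_aboveI\<close>)
  show ?thesis
    by (rule integrable_monotone_convergence[where f="\<lambda>n x. trunc n (f x)", OF integrable_trunc[OF f] _ _ lim f])
       (simp_all add: mono_trunc nonneg trunc_tendsto)
qed

lemma tendsto_integral_indicator_trunc:
  fixes f :: "'a \<Rightarrow> real"
  assumes f: "integrable M f" and A: "A \<in> sets M"
  shows "(\<lambda>n. \<integral>x. indicator A x * trunc n (f x) \<partial>M) \<longlonglongrightarrow> (\<integral>x. indicator A x * f x \<partial>M)"
proof (rule integral_dominated_convergence[where w="\<lambda>x. \<bar>f x\<bar>"])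
  have [measurable]: "f \<in> borel_measurable M" using f by auto
  show "(\<lambda>x. indicator A x * f x) \<in> borel_measurable M" using A by measurable
  show "(\<lambda>x. indicator A x * trunc n (f x)) \<in> borel_measurable M" for n using A by measurable
qed (use f in \<open>auto intro!: AE_I2 tendsto_mult tendsto_const trunc_tendsto
                   simp: indicator_def abs_trunc_le\<close>)

lemma tendsto_integral_trunc_mult_trunc:
  fixes f g :: "'a \<Rightarrow> real"
  assumes [measurable]: "f \<in> borel_measurable M" "g \<in> borel_measurable M"
    and fg: "integrable M (\<lambda>x. f x * g x)"
  shows "(\<lambda>n. \<integral>x. trunc n (f x) * trunc n (g x) \<partial>M) \<longlonglongrightarrow> (\<integral>x. f x * g x \<partial>M)"
proof (rule integral_dominated_convergence[where w="\<lambda>x. \<bar>f x * g x\<bar>"])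
  show "AE x in M. norm (trunc n (f x) * trunc n (g x)) \<le> \<bar>f x * g x\<bar>" for n
    by (intro AE_I2) (simp add: abs_mult mult_mono abs_trunc_le)
qed (use fg in \<open>auto intro!: AE_I2 tendsto_mult trunc_tendsto\<close>)

lemma abs_le_sq_plus_one: "\<bar>t\<bar> \<le> t\<^sup>2 + (1::real)"
proof -
  have "0 \<le> (\<bar>t\<bar> - 1)\<^sup>2" by simp
  then show ?thesis by (simp add: power2_eq_square algebra_simps)
qed

lemma sq_sum3_le: "(a + b + c)\<^sup>2 \<le> 3 * (a\<^sup>2 + b\<^sup>2 + (c::real)\<^sup>2)"
proof -
  have "0 \<le> (a - b)\<^sup>2 + (b - c)\<^sup>2 + (a - c)\<^sup>2" by simp
  then show ?thesis by (simp add: power2_eq_square algebra_simps)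
qed

lemma norm_sq_sum3_le:
  fixes a b c :: "'a :: real_normed_vector"
  shows "(norm (a + b + c))\<^sup>2 \<le> 3 * ((norm a)\<^sup>2 + (norm b)\<^sup>2 + (norm c)\<^sup>2)"
proof -
  have "(norm (a + b + c))\<^sup>2 \<le> (norm a + norm b + norm c)\<^sup>2"
    by (intro power_mono order_trans[OF norm_triangle_ineq add_right_mono[OF norm_triangle_ineq]]) simp_all
  also have "\<dots> \<le> 3 * ((norm a)\<^sup>2 + (norm b)\<^sup>2 + (norm c)\<^sup>2)"
    by (rule sq_sum3_le)
  finally show ?thesis .
qed

lemma norm_diff_sq_le:
  fixes a b :: "'a :: real_normed_vector"
  shows "(norm (a - b))\<^sup>2 \<le> 2 * (norm a)\<^sup>2 + 2 * (norm b)\<^sup>2"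
proof -
  have "(norm (a - b))\<^sup>2 \<le> (norm a + norm b)\<^sup>2"
    by (intro power_mono norm_triangle_ineq4) auto
  also have "\<dots> \<le> 2 * (norm a)\<^sup>2 + 2 * (norm b)\<^sup>2"
    using sum_squares_bound[of "norm a" "norm b"] by (simp add: power2_sum)
  finally show ?thesis .
qed

lemma sq_sum_le_weighted:
  fixes a w :: "'i \<Rightarrow> real"
  assumes "\<And>k. k \<in> I \<Longrightarrow> 0 < w k"
  shows "(\<Sum>k\<in>I. a k)\<^sup>2 \<le> (\<Sum>k\<in>I. w k) * (\<Sum>k\<in>I. (a k)\<^sup>2 / w k)"
proof -
  have "(\<Sum>k\<in>I. sqrt (w k) * (a k / sqrt (w k)))\<^sup>2
      \<le> (\<Sum>k\<in>I. (sqrt (w k))\<^sup>2) * (\<Sum>k\<in>I. (a k / sqrt (w k))\<^sup>2)"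
    by (rule Cauchy_Schwarz_ineq_sum)
  moreover have "(\<Sum>k\<in>I. sqrt (w k) * (a k / sqrt (w k))) = (\<Sum>k\<in>I. a k)"
    using assms by (intro sum.cong) (auto simp: less_imp_neq[symmetric])
  moreover have "(\<Sum>k\<in>I. (sqrt (w k))\<^sup>2) = (\<Sum>k\<in>I. w k)"
    using assms by (intro sum.cong) (auto simp: less_imp_le)
  moreover have "(\<Sum>k\<in>I. (a k / sqrt (w k))\<^sup>2) = (\<Sum>k\<in>I. (a k)\<^sup>2 / w k)"
    using assms by (intro sum.cong) (auto simp: power_divide less_imp_le)
  ultimately show ?thesis by simp
qed

lemma sum_power_atLeastLessThan_le:
  fixes r :: real
  assumes "0 \<le> r" "r < 1"
  shows "(\<Sum>k\<in>{n..<m}. r ^ k) \<le> r ^ n / (1 - r)"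
proof (cases "n \<le> m")
  case True
  have "(\<Sum>k\<in>{n..<m}. r ^ k) = (\<Sum>k\<in>{0..<m}. r ^ k) - (\<Sum>k\<in>{0..<n}. r ^ k)"
    using sum_diff_nat_ivl[of 0 n m "\<lambda>k. r ^ k"] True by simp
  also have "\<dots> = (r ^ n - r ^ m) / (1 - r)"
    using assms by (simp add: atLeast0LessThan sum_gp_strict diff_divide_distrib[symmetric])
  also have "\<dots> \<le> r ^ n / (1 - r)" using assms by (intro divide_right_mono) auto
  finally show ?thesis .
qed (use assms in auto)

lemma Re_le_of_expansion_bound:
  fixes q m :: complex and r \<theta> :: "'j \<Rightarrow> complex"
  assumes close: "cmod (q - m - complex_of_real (a ^ n) * (\<Sum>j\<in>J. \<theta> j ^ n * r j)) \<le> b * a ^ n * g"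
    and a: "0 \<le> a" "a \<le> 1" and b: "0 \<le> b" "b \<le> 1" and \<theta>: "\<And>j. j \<in> J \<Longrightarrow> cmod (\<theta> j) = 1"
  shows "Re q \<le> cmod m + (\<Sum>j\<in>J. cmod (r j)) + \<bar>g\<bar>"
proof -
  define S where "S = complex_of_real (a ^ n) * (\<Sum>j\<in>J. \<theta> j ^ n * r j)"
  have an: "0 \<le> a ^ n" "a ^ n \<le> 1" using a by (auto simp: power_le_one)
  have "cmod S = a ^ n * cmod (\<Sum>j\<in>J. \<theta> j ^ n * r j)"
    unfolding S_def norm_mult norm_of_real by (simp add: an(1))
  also have "\<dots> \<le> a ^ n * (\<Sum>j\<in>J. cmod (\<theta> j ^ n * r j))"
    by (intro mult_left_mono norm_sum an(1))
  also have "\<dots> = a ^ n * (\<Sum>j\<in>J. cmod (r j))"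
    using \<theta> by (simp add: norm_mult norm_power)
  also have "\<dots> \<le> (\<Sum>j\<in>J. cmod (r j))"
    using an by (simp add: mult_left_le_one_le sum_nonneg)
  finally have S_le: "cmod S \<le> (\<Sum>j\<in>J. cmod (r j))" .
  have ba: "0 \<le> b * a ^ n" "b * a ^ n \<le> 1"
    using b an mult_mono[OF b(2) an(2)] by simp_all
  have "b * a ^ n * g \<le> b * a ^ n * \<bar>g\<bar>" by (rule mult_left_mono[OF abs_ge_self ba(1)])
  also have "\<dots> \<le> \<bar>g\<bar>" by (rule mult_left_le_one_le[OF abs_ge_zero ba])
  finally have "b * a ^ n * g \<le> \<bar>g\<bar>" .
  then have E_le: "cmod (q - m - S) \<le> \<bar>g\<bar>" using close unfolding S_def by linarith
  have "Re q = Re m + Re S + Re (q - m - S)" by simp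
  also have "\<dots> \<le> cmod m + cmod S + cmod (q - m - S)"
    by (intro add_mono complex_Re_le_cmod)
  finally show ?thesis using S_le E_le by linarith
qed

lemma integrable_complex_iff:
  fixes f :: "'a \<Rightarrow> complex"
  shows "integrable M f \<longleftrightarrow> integrable M (\<lambda>x. Re (f x)) \<and> integrable M (\<lambda>x. Im (f x))"
proof safe
  assume "integrable M (\<lambda>x. Re (f x))" "integrable M (\<lambda>x. Im (f x))"
  then have "integrable M (\<lambda>x. complex_of_real (Re (f x)) + \<i> * complex_of_real (Im (f x)))"
    by (intro Bochner_Integration.integrable_add integrable_mult_right integrable_of_real)
  then show "integrable M f" by (simp add: complex_eq[symmetric])
qed auto

lemma integrable_mult_of_integrable_sq:
  fixes f g :: "'a \<Rightarrow> real"
  assumes "f \<in> borel_measurable M" "g \<in> borel_measurable M"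
    and "integrable M (\<lambda>x. (f x)\<^sup>2)" "integrable M (\<lambda>x. (g x)\<^sup>2)"
  shows "integrable M (\<lambda>x. f x * g x)"
proof (rule Bochner_Integration.integrable_bound[where f="\<lambda>x. ((f x)\<^sup>2 + (g x)\<^sup>2) / 2"])
  show "integrable M (\<lambda>x. ((f x)\<^sup>2 + (g x)\<^sup>2) / 2)" using assms by auto
  show "(\<lambda>x. f x * g x) \<in> borel_measurable M" using assms by measurable
  show "AE x in M. norm (f x * g x) \<le> norm (((f x)\<^sup>2 + (g x)\<^sup>2) / 2)"
    using sum_squares_bound[of "\<bar>f x\<bar>" "\<bar>g x\<bar>" for x]
    by (intro AE_I2) (simp add: abs_mult mult_ac)
qed

lemma integrable_sq_norm_diff:
  fixes f g :: "'a \<Rightarrow> 'b :: {banach, second_countable_topology}"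
  assumes [measurable]: "f \<in> borel_measurable M" "g \<in> borel_measurable M"
    and "integrable M (\<lambda>x. (norm (f x))\<^sup>2)" "integrable M (\<lambda>x. (norm (g x))\<^sup>2)"
  shows "integrable M (\<lambda>x. (norm (f x - g x))\<^sup>2)"
proof (rule Bochner_Integration.integrable_bound[where f="\<lambda>x. 2 * (norm (f x))\<^sup>2 + 2 * (norm (g x))\<^sup>2"])
  show "integrable M (\<lambda>x. 2 * (norm (f x))\<^sup>2 + 2 * (norm (g x))\<^sup>2)" using assms by auto
  show "AE x in M. norm ((norm (f x - g x))\<^sup>2) \<le> norm (2 * (norm (f x))\<^sup>2 + 2 * (norm (g x))\<^sup>2)"
    using norm_diff_sq_le by (intro AE_I2) simp
qed measurable

lemma integral_measurable_subprob_algebra2: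
  fixes f :: "'a \<Rightarrow> 'b \<Rightarrow> real"
  assumes f[measurable]: "(\<lambda>(x, y). f x y) \<in> borel_measurable (M \<Otimes>\<^sub>M N)"
    and L[measurable]: "L \<in> measurable M (subprob_algebra N)"
  shows "(\<lambda>x. integral\<^sup>L (L x) (f x)) \<in> borel_measurable M"
proof -
  note integral_measurable_subprob_algebra[measurable]
  note measurable_distr2[measurable]
  have "(\<lambda>x. integral\<^sup>L (distr (L x) (M \<Otimes>\<^sub>M N) (\<lambda>y. (x, y))) (\<lambda>(x, y). f x y)) \<in> borel_measurable M"
    by measurable
  then show ?thesis
    by (rule measurable_cong[THEN iffD1, rotated]) (simp add: integral_distr)
qed

section \<open>Convergence from geometrically small increments\<close>

lemma summable_diff_iff_convergent:
  fixes f :: "nat \<Rightarrow> 'a :: real_normed_vector"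
  shows "summable (\<lambda>n. f (Suc n) - f n) \<longleftrightarrow> convergent f"
  unfolding summable_iff_convergent sum_lessThan_telescope
  by (rule convergent_diff_const_right_iff)

lemma AE_summable_norm_of_summable_integral_norm:
  fixes f :: "nat \<Rightarrow> 'a \<Rightarrow> 'b :: {banach, second_countable_topology}"
  assumes f: "\<And>n. integrable M (f n)" and summ: "summable (\<lambda>n. \<integral>x. norm (f n x) \<partial>M)"
  shows "AE x in M. summable (\<lambda>n. norm (f n x))"
proof -
  have [measurable]: "f n \<in> borel_measurable M" for n using f by auto
  have "(\<integral>\<^sup>+x. (\<Sum>n. ennreal (norm (f n x))) \<partial>M) = (\<Sum>n. \<integral>\<^sup>+x. ennreal (norm (f n x)) \<partial>M)"
    by (rule nn_integral_suminf) measurable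
  also have "\<dots> = (\<Sum>n. ennreal (\<integral>x. norm (f n x) \<partial>M))"
    by (intro suminf_cong nn_integral_eq_integral integrable_norm f) auto
  also have "\<dots> = ennreal (\<Sum>n. \<integral>x. norm (f n x) \<partial>M)"
    by (rule suminf_ennreal2[OF _ summ]) auto
  finally have "(\<integral>\<^sup>+x. (\<Sum>n. ennreal (norm (f n x))) \<partial>M) \<noteq> \<infinity>" by simp
  then have "AE x in M. (\<Sum>n. ennreal (norm (f n x))) \<noteq> \<infinity>"
    by (rule nn_integral_PInf_AE[rotated]) measurable
  then show ?thesis
    by eventually_elim (rule summable_suminf_not_top, auto)
qed

lemma (in prob_space) integral_norm_le_AM_GM:
  fixes f :: "'a \<Rightarrow> 'b :: {banach, second_countable_topology}"
  assumes [measurable]: "f \<in> borel_measurable M"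
    and sq: "integrable M (\<lambda>x. (norm (f x))\<^sup>2)" and s: "0 < s"
  shows "integrable M (\<lambda>x. norm (f x))"
    and "(\<integral>x. norm (f x) \<partial>M) \<le> (s + (\<integral>x. (norm (f x))\<^sup>2 \<partial>M) / s) / 2"
proof -
  have pointwise: "norm (f x) \<le> (s + (norm (f x))\<^sup>2 / s) / 2" for x
    using sum_squares_bound[of "norm (f x)" s] s by (simp add: field_simps power2_eq_square)
  have bound_int: "integrable M (\<lambda>x. (s + (norm (f x))\<^sup>2 / s) / 2)" using sq by auto
  have bound_nonneg: "0 \<le> (s + (norm (f x))\<^sup>2 / s) / 2" for x
    using s by (auto intro!: add_nonneg_nonneg divide_nonneg_pos)
  show int: "integrable M (\<lambda>x. norm (f x))"
    by (rule Bochner_Integration.integrable_bound[OF bound_int])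
       (use pointwise bound_nonneg in \<open>auto intro!: AE_I2\<close>)
  have "(\<integral>x. norm (f x) \<partial>M) \<le> (\<integral>x. (s + (norm (f x))\<^sup>2 / s) / 2 \<partial>M)"
    by (rule integral_mono[OF int bound_int pointwise])
  also have "\<dots> = (s + (\<integral>x. (norm (f x))\<^sup>2 \<partial>M) / s) / 2"
    using sq by (simp add: prob_space)
  finally show "(\<integral>x. norm (f x) \<partial>M) \<le> (s + (\<integral>x. (norm (f x))\<^sup>2 \<partial>M) / s) / 2" .
qed

lemma (in prob_space) AE_convergent_of_geometric_increments:
  fixes Z :: "nat \<Rightarrow> 'a \<Rightarrow> 'b :: {banach, second_countable_topology}"
  assumes [measurable]: "\<And>n. Z n \<in> borel_measurable M"
    and D_sq: "\<And>n. integrable M (\<lambda>x. (norm (Z (Suc n) x - Z n x))\<^sup>2)"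
    and D_bound: "\<And>n. (\<integral>x. (norm (Z (Suc n) x - Z n x))\<^sup>2 \<partial>M) \<le> C * r ^ (2 * n)"
    and r: "0 < r" "r < 1"
  shows "AE x in M. convergent (\<lambda>n. Z n x)"
proof -
  have L1_bound: "(\<integral>x. norm (Z (Suc n) x - Z n x) \<partial>M) \<le> (1 + C) / 2 * r ^ n" for n
  proof -
    have rn: "0 < r ^ n" using r by simp
    have "(\<integral>x. norm (Z (Suc n) x - Z n x) \<partial>M)
        \<le> (r ^ n + (\<integral>x. (norm (Z (Suc n) x - Z n x))\<^sup>2 \<partial>M) / r ^ n) / 2"
      by (rule integral_norm_le_AM_GM(2)[OF _ D_sq rn]) measurable
    also have "\<dots> \<le> (r ^ n + C * r ^ (2 * n) / r ^ n) / 2"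
      using D_bound[of n] rn by (intro divide_right_mono add_left_mono) auto
    also have "\<dots> = (1 + C) / 2 * r ^ n"
      using rn by (simp add: power_mult power2_eq_square field_simps)
    finally show ?thesis .
  qed
  have "summable (\<lambda>n. \<integral>x. norm (Z (Suc n) x - Z n x) \<partial>M)"
  proof (rule summable_comparison_test[where g="\<lambda>n. (1 + C) / 2 * r ^ n"])
    show "\<exists>N. \<forall>n\<ge>N. norm (\<integral>x. norm (Z (Suc n) x - Z n x) \<partial>M) \<le> (1 + C) / 2 * r ^ n"
      using L1_bound by (auto simp: integral_nonneg_AE)
    show "summable (\<lambda>n. (1 + C) / 2 * r ^ n)"
      using r by (intro summable_mult summable_geometric) auto
  qed
  moreover have "integrable M (\<lambda>x. Z (Suc n) x - Z n x)" for n
  proof -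
    have meas: "(\<lambda>x. Z (Suc n) x - Z n x) \<in> borel_measurable M" by measurable
    have "integrable M (\<lambda>x. norm (Z (Suc n) x - Z n x))"
      by (rule integral_norm_le_AM_GM(1)[OF meas D_sq zero_less_one])
    then show ?thesis using integrable_norm_iff[OF meas] by simp
  qed
  ultimately have "AE x in M. summable (\<lambda>n. norm (Z (Suc n) x - Z n x))"
    by (intro AE_summable_norm_of_summable_integral_norm)
  then show ?thesis
    by eventually_elim (simp add: summable_diff_iff_convergent[symmetric] summable_norm_cancel)
qed

lemma integral_sq_norm_diff_le_geometric:
  fixes Z :: "nat \<Rightarrow> 'a \<Rightarrow> 'b :: {banach, second_countable_topology}"
  assumes [measurable]: "\<And>n. Z n \<in> borel_measurable M"
    and D_sq: "\<And>k. integrable M (\<lambda>x. (norm (Z (Suc k) x - Z k x))\<^sup>2)"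
    and D_bound: "\<And>k. (\<integral>x. (norm (Z (Suc k) x - Z k x))\<^sup>2 \<partial>M) \<le> C * r ^ (2 * k)"
    and r: "0 < r" "r < 1" and C: "0 \<le> C" and nm: "n \<le> m"
    and diff_sq: "integrable M (\<lambda>x. (norm (Z m x - Z n x))\<^sup>2)"
  shows "(\<integral>x. (norm (Z m x - Z n x))\<^sup>2 \<partial>M) \<le> C * (r ^ n / (1 - r))\<^sup>2"
proof -
  define S where "S = (\<Sum>k\<in>{n..<m}. r ^ k)"
  have S: "0 \<le> S" "S \<le> r ^ n / (1 - r)"
    unfolding S_def using r by (auto intro: sum_nonneg sum_power_atLeastLessThan_le)
  \<comment> \<open>Cauchy--Schwarz with weights \<open>r ^ k\<close> spreads the geometric decay over the telescoping sum.\<close>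
  have pointwise: "(norm (Z m x - Z n x))\<^sup>2 \<le> S * (\<Sum>k\<in>{n..<m}. (norm (Z (Suc k) x - Z k x))\<^sup>2 / r ^ k)" for x
  proof -
    have "norm (Z m x - Z n x) \<le> (\<Sum>k\<in>{n..<m}. norm (Z (Suc k) x - Z k x))"
      using sum_Suc_diff'[OF nm, of "\<lambda>k. Z k x"] norm_sum by metis
    then have "(norm (Z m x - Z n x))\<^sup>2 \<le> (\<Sum>k\<in>{n..<m}. norm (Z (Suc k) x - Z k x))\<^sup>2"
      by (intro power_mono) auto
    also have "\<dots> \<le> S * (\<Sum>k\<in>{n..<m}. (norm (Z (Suc k) x - Z k x))\<^sup>2 / r ^ k)"
      unfolding S_def by (rule sq_sum_le_weighted) (use r in auto)
    finally show ?thesis .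
  qed
  have "(\<integral>x. (norm (Z m x - Z n x))\<^sup>2 \<partial>M)
      \<le> (\<integral>x. S * (\<Sum>k\<in>{n..<m}. (norm (Z (Suc k) x - Z k x))\<^sup>2 / r ^ k) \<partial>M)"
    by (rule integral_mono[OF diff_sq]) (use D_sq pointwise in auto)
  also have "\<dots> = S * (\<Sum>k\<in>{n..<m}. (\<integral>x. (norm (Z (Suc k) x - Z k x))\<^sup>2 \<partial>M) / r ^ k)"
    using D_sq by (simp add: Bochner_Integration.integral_sum)
  also have "\<dots> \<le> S * (\<Sum>k\<in>{n..<m}. C * r ^ k)"
  proof (intro mult_left_mono[OF _ S(1)] sum_mono)
    fix k
    have "(\<integral>x. (norm (Z (Suc k) x - Z k x))\<^sup>2 \<partial>M) / r ^ k \<le> C * r ^ (2 * k) / r ^ k"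
      using D_bound[of k] r by (intro divide_right_mono) auto
    also have "\<dots> = C * r ^ k" using r by (simp add: power_mult power2_eq_square field_simps)
    finally show "(\<integral>x. (norm (Z (Suc k) x - Z k x))\<^sup>2 \<partial>M) / r ^ k \<le> C * r ^ k" .
  qed
  also have "\<dots> = C * S\<^sup>2" by (simp add: S_def sum_distrib_left power2_eq_square mult_ac)
  also have "\<dots> \<le> C * (r ^ n / (1 - r))\<^sup>2" using S C by (intro mult_left_mono power_mono) auto
  finally show ?thesis .
qed

lemma integral_sq_norm_diff_limit_le:
  fixes Z :: "nat \<Rightarrow> 'a \<Rightarrow> 'b :: {banach, second_countable_topology}"
  assumes [measurable]: "\<And>n. Z n \<in> borel_measurable M" "Zinf \<in> borel_measurable M"
    and diff_sq: "\<And>m. integrable M (\<lambda>x. (norm (Z m x - Z n x))\<^sup>2)"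
    and lim: "AE x in M. (\<lambda>m. Z m x) \<longlonglongrightarrow> Zinf x"
    and bound: "\<And>m. n \<le> m \<Longrightarrow> (\<integral>x. (norm (Z m x - Z n x))\<^sup>2 \<partial>M) \<le> B"
  shows "integrable M (\<lambda>x. (norm (Z n x - Zinf x))\<^sup>2)"
    and "(\<integral>x. (norm (Z n x - Zinf x))\<^sup>2 \<partial>M) \<le> B"
proof -
  have B: "0 \<le> B" using bound[of n] by simp
  have "(\<integral>\<^sup>+x. ennreal ((norm (Z n x - Zinf x))\<^sup>2) \<partial>M)
      = (\<integral>\<^sup>+x. liminf (\<lambda>m. ennreal ((norm (Z m x - Z n x))\<^sup>2)) \<partial>M)"
  proof (rule nn_integral_cong_AE)
    show "AE x in M. ennreal ((norm (Z n x - Zinf x))\<^sup>2) = liminf (\<lambda>m. ennreal ((norm (Z m x - Z n x))\<^sup>2))"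
      using lim
    proof eventually_elim
      case (elim x)
      have "(\<lambda>m. ennreal ((norm (Z m x - Z n x))\<^sup>2)) \<longlonglongrightarrow> ennreal ((norm (Zinf x - Z n x))\<^sup>2)"
        by (intro tendsto_ennrealI tendsto_power tendsto_norm tendsto_diff elim tendsto_const)
      then have "liminf (\<lambda>m. ennreal ((norm (Z m x - Z n x))\<^sup>2)) = ennreal ((norm (Zinf x - Z n x))\<^sup>2)"
        by (intro lim_imp_Liminf) auto
      then show ?case by (simp add: norm_minus_commute)
    qed
  qed
  also have "\<dots> \<le> liminf (\<lambda>m. \<integral>\<^sup>+x. ennreal ((norm (Z m x - Z n x))\<^sup>2) \<partial>M)"
    by (rule nn_integral_liminf) measurable
  also have "\<dots> \<le> ennreal B"
  proof (rule Liminf_le)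
    show "\<forall>\<^sub>F m in sequentially. (\<integral>\<^sup>+x. ennreal ((norm (Z m x - Z n x))\<^sup>2) \<partial>M) \<le> ennreal B"
      unfolding eventually_sequentially
      using bound by (auto simp: nn_integral_eq_integral[OF diff_sq] intro!: exI[of _ n] ennreal_leI)
  qed simp
  finally have nn_bound: "(\<integral>\<^sup>+x. ennreal ((norm (Z n x - Zinf x))\<^sup>2) \<partial>M) \<le> ennreal B" .
  show int: "integrable M (\<lambda>x. (norm (Z n x - Zinf x))\<^sup>2)"
    by (rule integrableI_nonneg) (auto intro: le_less_trans[OF nn_bound])
  have "ennreal (\<integral>x. (norm (Z n x - Zinf x))\<^sup>2 \<partial>M) \<le> ennreal B"
    using nn_bound by (subst nn_integral_eq_integral[OF int, symmetric]) auto
  then show "(\<integral>x. (norm (Z n x - Zinf x))\<^sup>2 \<partial>M) \<le> B"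
    using B by (simp add: ennreal_le_iff)
qed

lemma (in prob_space) conv_as_L2_of_geometric_increments:
  fixes Z :: "nat \<Rightarrow> 'a \<Rightarrow> complex"
  assumes Z_meas[measurable]: "\<And>n. Z n \<in> borel_measurable M"
    and Z0_sq: "integrable M (\<lambda>x. (cmod (Z 0 x))\<^sup>2)"
    and D_sq: "\<And>n. integrable M (\<lambda>x. (cmod (Z (Suc n) x - Z n x))\<^sup>2)"
    and D_bound: "\<And>n. (\<integral>x. (cmod (Z (Suc n) x - Z n x))\<^sup>2 \<partial>M) \<le> C * q ^ n"
    and q: "0 < q" "q < 1"
  shows "\<exists>Zinf. conv_as_L2 M Z Zinf"
proof -
  define r where "r = sqrt q"
  have r: "0 < r" "r < 1" and q_eq: "q ^ n = r ^ (2 * n)" for n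
    using q by (auto simp: r_def power_mult)
  have "0 \<le> (\<integral>x. (cmod (Z (Suc 0) x - Z 0 x))\<^sup>2 \<partial>M)" by (rule integral_nonneg_AE) auto
  from order_trans[OF this D_bound[of 0]] have C: "0 \<le> C" by simp
  have Z_sq: "integrable M (\<lambda>x. (cmod (Z n x))\<^sup>2)" for n
  proof (induction n)
    case (Suc n)
    have "integrable M (\<lambda>x. (cmod (Z n x - (Z n x - Z (Suc n) x)))\<^sup>2)"
      by (rule integrable_sq_norm_diff) (use Suc D_sq[of n] in \<open>auto simp: norm_minus_commute\<close>)
    then show ?case by simp
  qed (rule Z0_sq)
  have diff_sq: "integrable M (\<lambda>x. (cmod (Z m x - Z n x))\<^sup>2)" for m n
    by (rule integrable_sq_norm_diff) (use Z_sq in auto)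
  have "AE x in M. convergent (\<lambda>n. Z n x)"
    by (rule AE_convergent_of_geometric_increments[where Z=Z, OF _ D_sq _ r]) (use D_bound q_eq in auto)
  then have lim: "AE x in M. (\<lambda>n. Z n x) \<longlonglongrightarrow> lim (\<lambda>n. Z n x)"
    by eventually_elim (simp add: convergent_LIMSEQ_iff)
  define Zinf where "Zinf x = lim (\<lambda>n. Z n x)" for x
  have Zinf_meas[measurable]: "Zinf \<in> borel_measurable M" unfolding Zinf_def[abs_def] by measurable
  define B where "B n = C * (r ^ n / (1 - r))\<^sup>2" for n
  have dist_bound: "(\<integral>x. (cmod (Z m x - Z n x))\<^sup>2 \<partial>M) \<le> B n" if "n \<le> m" for n m
    unfolding B_def
    by (rule integral_sq_norm_diff_le_geometric[where Z=Z, OF _ D_sq _ r C that diff_sq])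
       (use D_bound q_eq in auto)
  note limit_bound = integral_sq_norm_diff_limit_le[OF Z_meas Zinf_meas diff_sq lim[folded Zinf_def] dist_bound]
  have "B = (\<lambda>n. C / (1 - r)\<^sup>2 * (r\<^sup>2) ^ n)"
    by (simp add: B_def fun_eq_iff power_divide power2_eq_square power_mult_distrib)
  moreover have "(\<lambda>n. C / (1 - r)\<^sup>2 * (r\<^sup>2) ^ n) \<longlonglongrightarrow> C / (1 - r)\<^sup>2 * 0"
    using r by (intro tendsto_mult tendsto_const LIMSEQ_power_zero) (simp add: abs_square_less_1)
  ultimately have B_lim: "B \<longlonglongrightarrow> 0" by simp
  have L2_lim: "(\<lambda>n. \<integral>x. (cmod (Z n x - Zinf x))\<^sup>2 \<partial>M) \<longlonglongrightarrow> 0"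
    by (rule real_tendsto_sandwich[OF _ _ tendsto_const B_lim])
       (auto intro!: always_eventually limit_bound(2) integral_nonneg_AE)
  have "integrable M (\<lambda>x. (cmod (Z 0 x - (Z 0 x - Zinf x)))\<^sup>2)"
    by (rule integrable_sq_norm_diff) (use Z_sq limit_bound(1) in auto)
  then have Zinf_sq: "integrable M (\<lambda>x. (cmod (Zinf x))\<^sup>2)" by simp
  show ?thesis
    unfolding conv_as_L2_def
    by (intro exI[of _ Zinf] conjI allI Zinf_meas Zinf_sq lim[folded Zinf_def] limit_bound(1) L2_lim)
qed

definition child :: "bool \<Rightarrow> ('s \<Rightarrow> 'a) \<Rightarrow> 's \<Rightarrow> 's \<Rightarrow> 's \<Rightarrow> 'a" where
  "child b u x y z = u (if b then z else y)"

lemma measurable_child: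
  assumes [measurable]: "u \<in> borel_measurable M"
  shows "(\<lambda>(x, y, z). child b u x y z) \<in> borel_measurable (M \<Otimes>\<^sub>M M \<Otimes>\<^sub>M M)"
  by (cases b) (simp_all add: child_def split_beta')

lemma Pop3_child_False: "Pop3 P (child False u) x = (\<integral>yz. u (fst yz) \<partial>P x)"
  and Pop3_child_True: "Pop3 P (child True u) x = (\<integral>yz. u (snd yz) \<partial>P x)"
  by (simp_all add: Pop3_def child_def)

definition Qreal :: "('s \<Rightarrow> ('s \<times> 's) measure) \<Rightarrow> ('s \<Rightarrow> real) \<Rightarrow> 's \<Rightarrow> real" where
  "Qreal P u x = (Pop3 P (child False u) x + Pop3 P (child True u) x) / 2"

lemma Qop_of_real: "Qop P (\<lambda>y. complex_of_real (u y)) = (\<lambda>x. complex_of_real (Qreal P u x))"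
  by (simp add: Qop_def Qreal_def Pop3_child_False Pop3_child_True fun_eq_iff)

lemma Qop_iter_of_real:
  "(Qop P ^^ n) (\<lambda>y. complex_of_real (u y)) = (\<lambda>x. complex_of_real ((Qreal P ^^ n) u x))"
  by (induction n) (simp_all add: Qop_of_real)

context
  fixes M P F \<mu> \<alpha> J alj R \<beta>
  assumes F3: "assmF3 M P F \<mu> \<alpha> J alj R \<beta>"
begin

lemma assmF3_alpha_pos: "0 < \<alpha>"
  using F3 unfolding assmF3_def by (elim conjE)

lemma assmF3_alpha_less_one: "\<alpha> < 1"
  using F3 unfolding assmF3_def by (elim conjE)

lemma assmF3_cmod: "\<forall>j\<in>J. cmod (alj j) = \<alpha>"
  using F3 unfolding assmF3_def by (elim conjE)

lemma assmF3_beta: "\<forall>n. 0 < \<beta> n \<and> \<beta> n \<le> 1"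
  using F3 unfolding assmF3_def by (elim conjE)

lemma assmF3_R_CF: "j \<in> J \<Longrightarrow> h \<in> CF F \<Longrightarrow> R j h \<in> CF F"
  using F3 unfolding assmF3_def by (elim conjE) blast

lemma assmF3_eigen: "j \<in> J \<Longrightarrow> h \<in> CF F \<Longrightarrow> x \<in> space M \<Longrightarrow> Qop P (R j h) x = alj j * R j h x"
  using F3 unfolding assmF3_def by (elim conjE) blast

lemma assmF3_expansion:
  "u \<in> F \<Longrightarrow> \<exists>g\<in>F. \<forall>n. \<forall>x\<in>space M.
    cmod ((Qop P ^^ n) (\<lambda>y. complex_of_real (u y)) x - complex_of_real (integral\<^sup>L \<mu> u)
      - complex_of_real (\<alpha> ^ n) * (\<Sum>j\<in>J. (alj j / complex_of_real \<alpha>) ^ n * R j (\<lambda>y. complex_of_real (u y)) x))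
    \<le> \<beta> n * \<alpha> ^ n * g x"
  using F3 unfolding assmF3_def by blast

end

section \<open>Bifurcating Markov chains\<close>

locale bmc =
  fixes Pr :: "'w measure" and M :: "'s measure" and P :: "'s \<Rightarrow> ('s \<times> 's) measure"
    and \<nu> :: "'s measure" and X :: "bool list \<Rightarrow> 'w \<Rightarrow> 's" and F :: "('s \<Rightarrow> real) set"
  assumes BMC: "BMC Pr M P \<nu> X" and assmF: "assmF M P \<nu> F"
begin

sublocale prob_space Pr
  using BMC by (simp add: BMC_def)

lemma measurable_X[measurable]: "X i \<in> Pr \<rightarrow>\<^sub>M M"
  using BMC by (simp add: BMC_def)

lemma distr_X_root: "distr Pr M (X []) = \<nu>"
  using BMC by (simp add: BMC_def)

lemma space_nu: "space \<nu> = space M"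
proof -
  have "sets \<nu> = sets M" using BMC unfolding BMC_def by (elim conjE)
  then show ?thesis by (rule sets_eq_imp_space_eq)
qed

lemma X_in_space: "\<omega> \<in> space Pr \<Longrightarrow> X i \<omega> \<in> space M"
  using measurable_space[OF measurable_X] by blast

lemma measurable_P_subprob[measurable]: "P \<in> M \<rightarrow>\<^sub>M subprob_algebra (M \<Otimes>\<^sub>M M)"
  using BMC by (auto simp: BMC_def intro: measurable_prob_algebraD)

lemma
  assumes "x \<in> space M"
  shows prob_space_P: "prob_space (P x)" and sets_P: "sets (P x) = sets (M \<Otimes>\<^sub>M M)"
  using measurable_space[of P M "prob_algebra (M \<Otimes>\<^sub>M M)"] BMC assms
  by (auto simp: BMC_def space_prob_algebra)

lemma F_measurable: "u \<in> F \<Longrightarrow> u \<in> borel_measurable M"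
  and F_const: "(\<lambda>_. c) \<in> F"
  and F_add: "u \<in> F \<Longrightarrow> w \<in> F \<Longrightarrow> (\<lambda>x. u x + w x) \<in> F"
  and F_cmult: "u \<in> F \<Longrightarrow> (\<lambda>x. c * u x) \<in> F"
  and F_sq: "u \<in> F \<Longrightarrow> (\<lambda>x. (u x)\<^sup>2) \<in> F"
  and integrable_nu_F: "u \<in> F \<Longrightarrow> integrable \<nu> u"
  and integrable_P_F: "u \<in> F \<Longrightarrow> w \<in> F \<Longrightarrow> x \<in> space M \<Longrightarrow>
    integrable (P x) (\<lambda>yz. u (fst yz) * w (snd yz))"
  and Ptens_F: "u \<in> F \<Longrightarrow> w \<in> F \<Longrightarrow> Ptens P u w \<in> F"
  using assmF by (auto simp: assmF_def)

lemma F_diff: "u \<in> F \<Longrightarrow> w \<in> F \<Longrightarrow> (\<lambda>x. u x - w x) \<in> F"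
  using F_add[of u "\<lambda>x. (-1) * w x"] F_cmult[of w "-1"] by simp

lemma sq_plus_one_F: "u \<in> F \<Longrightarrow> (\<lambda>x. (u x)\<^sup>2 + 1) \<in> F"
  by (intro F_add F_sq F_const)

lemma Pop3_child_F:
  assumes u: "u \<in> F"
  shows "Pop3 P (child b u) \<in> F"
proof -
  have "Pop3 P (child b u) = (if b then Ptens P (\<lambda>_. 1) u else Ptens P u (\<lambda>_. 1))"
    by (cases b) (auto simp: Pop3_def child_def Ptens_def fun_eq_iff)
  then show ?thesis using Ptens_F[OF u F_const] Ptens_F[OF F_const u] by simp
qed

lemma integrable_P_child:
  "u \<in> F \<Longrightarrow> x \<in> space M \<Longrightarrow> integrable (P x) (\<lambda>yz. child b u x (fst yz) (snd yz))"
  using integrable_P_F[OF _ F_const, of u x 1] integrable_P_F[OF F_const, of u x 1]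
  by (cases b) (simp_all add: child_def)

lemma Qreal_F: "u \<in> F \<Longrightarrow> Qreal P u \<in> F"
  unfolding Qreal_def divide_inverse mult.commute[of _ "inverse 2"]
  by (intro F_cmult F_add Pop3_child_F)

lemma Qreal_iter_F: "u \<in> F \<Longrightarrow> (Qreal P ^^ n) u \<in> F"
  by (induction n) (auto intro: Qreal_F)

lemma measurable_P_section:
  assumes x: "x \<in> space M" and g: "(\<lambda>(x, y, z). g x y z) \<in> borel_measurable (M \<Otimes>\<^sub>M M \<Otimes>\<^sub>M M)"
  shows "(\<lambda>yz. g x (fst yz) (snd yz)) \<in> borel_measurable (P x)"
proof -
  have "(\<lambda>yz. (x, fst yz, snd yz)) \<in> M \<Otimes>\<^sub>M M \<rightarrow>\<^sub>M M \<Otimes>\<^sub>M M \<Otimes>\<^sub>M M" using x by measurable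
  from measurable_compose[OF this g] have "(\<lambda>yz. g x (fst yz) (snd yz)) \<in> borel_measurable (M \<Otimes>\<^sub>M M)"
    by (simp add: split_beta')
  then show ?thesis by (subst measurable_cong_sets[OF sets_P[OF x] refl])
qed

lemma borel_measurable_Pop3:
  assumes "(\<lambda>(x, y, z). g x y z) \<in> borel_measurable (M \<Otimes>\<^sub>M M \<Otimes>\<^sub>M M)"
  shows "Pop3 P g \<in> borel_measurable M"
proof -
  have "(\<lambda>(x, yz). g x (fst yz) (snd yz)) \<in> borel_measurable (M \<Otimes>\<^sub>M (M \<Otimes>\<^sub>M M))"
    using assms by (simp add: split_beta')
  then have "(\<lambda>x. integral\<^sup>L (P x) ((\<lambda>x yz. g x (fst yz) (snd yz)) x)) \<in> borel_measurable M"
    by (intro integral_measurable_subprob_algebra2[OF _ measurable_P_subprob]) (simp only: split_beta')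
  then show ?thesis unfolding Pop3_def by simp
qed

lemma Pop3_const: "x \<in> space M \<Longrightarrow> Pop3 P (\<lambda>_ _ _. c) x = c"
  unfolding Pop3_def using prob_space.prob_space[OF prob_space_P] by simp

lemma abs_Pop3_le:
  assumes x: "x \<in> space M" and g: "(\<lambda>(x, y, z). g x y z) \<in> borel_measurable (M \<Otimes>\<^sub>M M \<Otimes>\<^sub>M M)"
    and B: "\<And>y z. \<bar>g x y z\<bar> \<le> B"
  shows "\<bar>Pop3 P g x\<bar> \<le> B"
proof -
  interpret Px: prob_space "P x" by (rule prob_space_P[OF x])
  have int: "integrable (P x) (\<lambda>yz. \<bar>g x (fst yz) (snd yz)\<bar>)"
    by (rule Px.integrable_const_bound[where B=B]) (use measurable_P_section[OF x g] B in auto)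
  have "\<bar>Pop3 P g x\<bar> \<le> (\<integral>yz. \<bar>g x (fst yz) (snd yz)\<bar> \<partial>P x)"
    unfolding Pop3_def real_norm_def[symmetric] by (rule integral_norm_bound)
  also have "\<dots> \<le> B" by (rule Px.integral_le_const[OF int AE_I2[OF B]])
  finally show ?thesis .
qed

lemma
  assumes x: "x \<in> space M" and g: "(\<lambda>(x, y, z). g x y z) \<in> borel_measurable (M \<Otimes>\<^sub>M M \<Otimes>\<^sub>M M)"
    and int: "integrable (P x) (\<lambda>yz. g x (fst yz) (snd yz))"
  shows Pop3_trunc_tendsto: "(\<lambda>n. Pop3 P (\<lambda>x y z. trunc n (g x y z)) x) \<longlonglongrightarrow> Pop3 P g x"
    and abs_Pop3_trunc_le:
      "\<bar>Pop3 P (\<lambda>x y z. trunc n (g x y z)) x\<bar> \<le> (\<integral>yz. \<bar>g x (fst yz) (snd yz)\<bar> \<partial>P x)"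
proof -
  interpret Px: prob_space "P x" by (rule prob_space_P[OF x])
  have meas: "(\<lambda>yz. g x (fst yz) (snd yz)) \<in> borel_measurable (P x)"
    by (rule measurable_P_section[OF x g])
  have meas_trunc: "(\<lambda>yz. trunc n (g x (fst yz) (snd yz))) \<in> borel_measurable (P x)" for n
    using borel_measurable_trunc[OF meas] .
  show "(\<lambda>n. Pop3 P (\<lambda>x y z. trunc n (g x y z)) x) \<longlonglongrightarrow> Pop3 P g x"
    unfolding Pop3_def
    by (rule integral_dominated_convergence[where w="\<lambda>yz. \<bar>g x (fst yz) (snd yz)\<bar>"])
       (use meas meas_trunc int trunc_tendsto abs_trunc_le in auto)
  have "\<bar>Pop3 P (\<lambda>x y z. trunc n (g x y z)) x\<bar> \<le> (\<integral>yz. \<bar>trunc n (g x (fst yz) (snd yz))\<bar> \<partial>P x)"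
    unfolding Pop3_def real_norm_def[symmetric] by (rule integral_norm_bound)
  also have "\<dots> \<le> (\<integral>yz. \<bar>g x (fst yz) (snd yz)\<bar> \<partial>P x)"
    by (rule integral_mono) (use int Px.integrable_trunc[OF meas] abs_trunc_le in auto)
  finally show "\<bar>Pop3 P (\<lambda>x y z. trunc n (g x y z)) x\<bar> \<le> (\<integral>yz. \<bar>g x (fst yz) (snd yz)\<bar> \<partial>P x)" .
qed

abbreviation H :: "nat \<Rightarrow> 'w measure" where
  "H \<equiv> Hfilt Pr M X"

lemma sets_H: "sets (H n) = sigma_sets (space Pr) (\<Union>j\<in>Tn n. {X j -` A \<inter> space Pr | A. A \<in> sets M})"
  unfolding Hfilt_def by (rule sets_measure_of) auto

lemma space_H: "space (H n) = space Pr"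
  unfolding Hfilt_def by (rule space_measure_of) auto

lemma sets_H_subset: "sets (H n) \<subseteq> sets Pr"
  unfolding sets_H by (rule sets.sigma_sets_subset) (auto intro: measurable_sets[OF measurable_X])

lemma subalgebra_H: "subalgebra Pr (H n)"
  unfolding subalgebra_def using sets_H_subset space_H by auto

lemma finite_measure_subalgebra_H: "finite_measure_subalgebra Pr (H n)"
  by unfold_locales (rule subalgebra_H)

lemma sets_H_mono: "n \<le> m \<Longrightarrow> sets (H n) \<subseteq> sets (H m)"
  unfolding sets_H by (rule sigma_sets_mono') (auto simp: Tn_def, blast intro: order_trans)

lemma measurable_X_H: "i \<in> Tn n \<Longrightarrow> X i \<in> H n \<rightarrow>\<^sub>M M"
  by (rule measurableI) (auto simp: space_H X_in_space sets_H intro!: sigma_sets.Basic)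

lemma measurable_X3:
  assumes "(\<lambda>(x, y, z). g x y z) \<in> borel_measurable (M \<Otimes>\<^sub>M M \<Otimes>\<^sub>M M)"
  shows "(\<lambda>\<omega>. g (X a \<omega>) (X b \<omega>) (X c \<omega>)) \<in> borel_measurable Pr"
proof -
  have "(\<lambda>\<omega>. (X a \<omega>, X b \<omega>, X c \<omega>)) \<in> Pr \<rightarrow>\<^sub>M M \<Otimes>\<^sub>M M \<Otimes>\<^sub>M M" by measurable
  from measurable_compose[OF this assms] show ?thesis by simp
qed

lemma integral_indicator_space:
  "(\<integral>\<omega>. indicator (space Pr) \<omega> * f \<omega> \<partial>Pr) = (\<integral>\<omega>. f \<omega> \<partial>Pr :: real)"
  by (rule Bochner_Integration.integral_cong) auto

lemma space_in_sets_H: "space Pr \<in> sets (H k)"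
  using sets.top[of "H k"] by (simp add: space_H)

lemma measurable_Pop3_X:
  assumes "(\<lambda>(x, y, z). g x y z) \<in> borel_measurable (M \<Otimes>\<^sub>M M \<Otimes>\<^sub>M M)"
  shows "(\<lambda>\<omega>. Pop3 P g (X a \<omega>)) \<in> borel_measurable Pr"
  using measurable_compose[OF measurable_X borel_measurable_Pop3[OF assms]] by (simp add: comp_def)

lemma integrable_Pop3_X_bounded:
  assumes g: "(\<lambda>(x, y, z). g x y z) \<in> borel_measurable (M \<Otimes>\<^sub>M M \<Otimes>\<^sub>M M)"
    and B: "\<And>x y z. \<bar>g x y z\<bar> \<le> B"
  shows "integrable Pr (\<lambda>\<omega>. Pop3 P g (X a \<omega>))"
  by (rule integrable_const_bound[where B=B])
     (use measurable_Pop3_X[OF g] abs_Pop3_le[OF X_in_space g B] in auto)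

lemma integral_indicator_prod_Gen:
  fixes g :: "bool list \<Rightarrow> 's \<Rightarrow> 's \<Rightarrow> 's \<Rightarrow> real"
  assumes A: "A \<in> sets (H k)"
    and meas: "\<And>i. i \<in> Gen k \<Longrightarrow> (\<lambda>(x, y, z). g i x y z) \<in> borel_measurable (M \<Otimes>\<^sub>M M \<Otimes>\<^sub>M M)"
    and bdd: "\<And>i x y z. i \<in> Gen k \<Longrightarrow> \<bar>g i x y z\<bar> \<le> B i"
  shows "(\<integral>\<omega>. indicator A \<omega> * (\<Prod>i\<in>Gen k. g i (X i \<omega>) (X (i @ [False]) \<omega>) (X (i @ [True]) \<omega>)) \<partial>Pr)
       = (\<integral>\<omega>. indicator A \<omega> * (\<Prod>i\<in>Gen k. Pop3 P (g i) (X i \<omega>)) \<partial>Pr)"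
proof -
  interpret fms: finite_measure_subalgebra Pr "H k" by (rule finite_measure_subalgebra_H)
  define f where "f \<omega> = (\<Prod>i\<in>Gen k. g i (X i \<omega>) (X (i @ [False]) \<omega>) (X (i @ [True]) \<omega>))" for \<omega>
  define r where "r \<omega> = (\<Prod>i\<in>Gen k. Pop3 P (g i) (X i \<omega>))" for \<omega>
  have ae: "AE \<omega> in Pr. real_cond_exp Pr (H k) f \<omega> = r \<omega>"
    using BMC meas bdd unfolding BMC_def f_def r_def by blast
  have f_meas: "f \<in> borel_measurable Pr"
    unfolding f_def by (intro borel_measurable_prod measurable_X3 meas)
  have r_meas: "r \<in> borel_measurable Pr"
    unfolding r_def by (intro borel_measurable_prod measurable_Pop3_X meas)
  have "\<bar>f \<omega>\<bar> \<le> (\<Prod>i\<in>Gen k. B i)" for \<omega>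
    unfolding f_def abs_prod by (intro prod_mono) (auto intro: bdd)
  then have f_int: "integrable Pr f"
    by (intro integrable_const_bound[where B="\<Prod>i\<in>Gen k. B i"] AE_I2 f_meas) simp
  have As: "A \<in> sets Pr" using A sets_H_subset by blast
  have "(\<integral>\<omega>. indicator A \<omega> * f \<omega> \<partial>Pr) = (\<integral>\<omega>. indicator A \<omega> * real_cond_exp Pr (H k) f \<omega> \<partial>Pr)"
    using fms.real_cond_exp_intA[OF f_int A] by (simp add: set_lebesgue_integral_def)
  also have "\<dots> = (\<integral>\<omega>. indicator A \<omega> * r \<omega> \<partial>Pr)"
    by (rule integral_cong_AE) (use ae As r_meas in auto)
  finally show ?thesis unfolding f_def r_def .
qed

lemma integral_indicator_prod:
  fixes g :: "bool list \<Rightarrow> 's \<Rightarrow> 's \<Rightarrow> 's \<Rightarrow> real"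
  assumes S: "S \<subseteq> Gen k" and A: "A \<in> sets (H k)"
    and meas: "\<And>i. i \<in> S \<Longrightarrow> (\<lambda>(x, y, z). g i x y z) \<in> borel_measurable (M \<Otimes>\<^sub>M M \<Otimes>\<^sub>M M)"
    and bdd: "\<And>i x y z. i \<in> S \<Longrightarrow> \<bar>g i x y z\<bar> \<le> B i"
  shows "(\<integral>\<omega>. indicator A \<omega> * (\<Prod>i\<in>S. g i (X i \<omega>) (X (i @ [False]) \<omega>) (X (i @ [True]) \<omega>)) \<partial>Pr)
       = (\<integral>\<omega>. indicator A \<omega> * (\<Prod>i\<in>S. Pop3 P (g i) (X i \<omega>)) \<partial>Pr)"
proof -
  define g' where "g' i x y z = (if i \<in> S then g i x y z else 1)" for i x y z
  have restrict: "(\<Prod>i\<in>Gen k. if i \<in> S then v i else 1) = (\<Prod>i\<in>S. v i)" for v :: "bool list \<Rightarrow> real"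
    using S prod.inter_restrict[OF finite_Gen, of v k S] by (simp add: Int_absorb1)
  have "(\<integral>\<omega>. indicator A \<omega> * (\<Prod>i\<in>Gen k. g' i (X i \<omega>) (X (i @ [False]) \<omega>) (X (i @ [True]) \<omega>)) \<partial>Pr)
      = (\<integral>\<omega>. indicator A \<omega> * (\<Prod>i\<in>Gen k. Pop3 P (g' i) (X i \<omega>)) \<partial>Pr)"
  proof (rule integral_indicator_prod_Gen[OF A, where B="\<lambda>i. if i \<in> S then B i else 1"])
    show "(\<lambda>(x, y, z). g' i x y z) \<in> borel_measurable (M \<Otimes>\<^sub>M M \<Otimes>\<^sub>M M)" for i
      by (cases "i \<in> S") (simp_all add: g'_def meas)
  qed (simp add: g'_def bdd)
  moreover have "Pop3 P (g' i) (X i \<omega>) = (if i \<in> S then Pop3 P (g i) (X i \<omega>) else 1)" if "\<omega> \<in> space Pr" for i \<omega>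
    using Pop3_const[OF X_in_space[OF that]] by (simp add: g'_def[abs_def])
  ultimately show ?thesis
    by (simp add: g'_def restrict cong: Bochner_Integration.integral_cong)
qed

lemma integral_indicator_vertex_bounded:
  assumes a: "a \<in> Gen k" and A: "A \<in> sets (H k)"
    and g: "(\<lambda>(x, y, z). g x y z) \<in> borel_measurable (M \<Otimes>\<^sub>M M \<Otimes>\<^sub>M M)" and B: "\<And>x y z. \<bar>g x y z\<bar> \<le> B"
  shows "(\<integral>\<omega>. indicator A \<omega> * g (X a \<omega>) (X (a @ [False]) \<omega>) (X (a @ [True]) \<omega>) \<partial>Pr)
       = (\<integral>\<omega>. indicator A \<omega> * Pop3 P g (X a \<omega>) \<partial>Pr)"
  using integral_indicator_prod[of "{a}" k A "\<lambda>_. g" "\<lambda>_. B"] a A g B by simp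

lemma integral_pair_bounded:
  assumes a: "a \<in> Gen k" and b: "b \<in> Gen k" and ab: "a \<noteq> b"
    and g: "(\<lambda>(x, y, z). g x y z) \<in> borel_measurable (M \<Otimes>\<^sub>M M \<Otimes>\<^sub>M M)" and B: "\<And>x y z. \<bar>g x y z\<bar> \<le> B"
  shows "(\<integral>\<omega>. g (X a \<omega>) (X (a @ [False]) \<omega>) (X (a @ [True]) \<omega>) * g (X b \<omega>) (X (b @ [False]) \<omega>) (X (b @ [True]) \<omega>) \<partial>Pr)
       = (\<integral>\<omega>. Pop3 P g (X a \<omega>) * Pop3 P g (X b \<omega>) \<partial>Pr)"
  using integral_indicator_prod[of "{a, b}" k "space Pr" "\<lambda>_. g" "\<lambda>_. B"] a b ab g B
  by (simp add: space_in_sets_H integral_indicator_space)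

lemma Pop3_trunc_X_tendsto:
  assumes \<omega>: "\<omega> \<in> space Pr" and g: "(\<lambda>(x, y, z). g x y z) \<in> borel_measurable (M \<Otimes>\<^sub>M M \<Otimes>\<^sub>M M)"
    and int_P: "\<And>x. x \<in> space M \<Longrightarrow> integrable (P x) (\<lambda>yz. g x (fst yz) (snd yz))"
  shows "(\<lambda>n. Pop3 P (\<lambda>x y z. trunc n (g x y z)) (X a \<omega>)) \<longlonglongrightarrow> Pop3 P g (X a \<omega>)"
  by (rule Pop3_trunc_tendsto[OF X_in_space[OF \<omega>] g int_P[OF X_in_space[OF \<omega>]]])

lemma abs_Pop3_trunc_X_le:
  assumes \<omega>: "\<omega> \<in> space Pr" and g: "(\<lambda>(x, y, z). g x y z) \<in> borel_measurable (M \<Otimes>\<^sub>M M \<Otimes>\<^sub>M M)"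
    and int_P: "\<And>x. x \<in> space M \<Longrightarrow> integrable (P x) (\<lambda>yz. g x (fst yz) (snd yz))"
    and \<Phi>: "\<And>x. x \<in> space M \<Longrightarrow> (\<integral>yz. \<bar>g x (fst yz) (snd yz)\<bar> \<partial>P x) \<le> \<Phi> x"
  shows "\<bar>Pop3 P (\<lambda>x y z. trunc n (g x y z)) (X a \<omega>)\<bar> \<le> \<Phi> (X a \<omega>)"
  using abs_Pop3_trunc_le[OF X_in_space[OF \<omega>, of a] g int_P[OF X_in_space[OF \<omega>]], of n]
    \<Phi>[OF X_in_space[OF \<omega>, of a]] by linarith

lemma integral_indicator_vertex:
  assumes a: "a \<in> Gen k" and A: "A \<in> sets (H k)"
    and g: "(\<lambda>(x, y, z). g x y z) \<in> borel_measurable (M \<Otimes>\<^sub>M M \<Otimes>\<^sub>M M)"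
    and int_P: "\<And>x. x \<in> space M \<Longrightarrow> integrable (P x) (\<lambda>yz. g x (fst yz) (snd yz))"
    and \<Phi>: "\<And>x. x \<in> space M \<Longrightarrow> (\<integral>yz. \<bar>g x (fst yz) (snd yz)\<bar> \<partial>P x) \<le> \<Phi> x"
    and int_\<Phi>: "integrable Pr (\<lambda>\<omega>. \<Phi> (X a \<omega>))"
    and int_g: "integrable Pr (\<lambda>\<omega>. g (X a \<omega>) (X (a @ [False]) \<omega>) (X (a @ [True]) \<omega>))"
  shows "(\<integral>\<omega>. indicator A \<omega> * g (X a \<omega>) (X (a @ [False]) \<omega>) (X (a @ [True]) \<omega>) \<partial>Pr)
       = (\<integral>\<omega>. indicator A \<omega> * Pop3 P g (X a \<omega>) \<partial>Pr)"
proof -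
  let ?G = "\<lambda>\<omega>. g (X a \<omega>) (X (a @ [False]) \<omega>) (X (a @ [True]) \<omega>)"
  let ?T = "\<lambda>n x y z. trunc n (g x y z)"
  have As: "A \<in> sets Pr" using A sets_H_subset by blast
  have eq: "(\<integral>\<omega>. indicator A \<omega> * trunc n (?G \<omega>) \<partial>Pr) = (\<integral>\<omega>. indicator A \<omega> * Pop3 P (?T n) (X a \<omega>) \<partial>Pr)" for n
    by (rule integral_indicator_vertex_bounded[OF a A measurable_trunc3[OF g] abs_trunc_le_index])
  have R: "(\<lambda>n. \<integral>\<omega>. indicator A \<omega> * Pop3 P (?T n) (X a \<omega>) \<partial>Pr)
      \<longlonglongrightarrow> (\<integral>\<omega>. indicator A \<omega> * Pop3 P g (X a \<omega>) \<partial>Pr)"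
  proof (rule integral_dominated_convergence[where w="\<lambda>\<omega>. \<Phi> (X a \<omega>)"])
    have [measurable]: "(\<lambda>\<omega>. Pop3 P g (X a \<omega>)) \<in> borel_measurable Pr"
      "(\<lambda>\<omega>. Pop3 P (?T n) (X a \<omega>)) \<in> borel_measurable Pr" for n
      by (intro measurable_Pop3_X g measurable_trunc3)+
    show "(\<lambda>\<omega>. indicator A \<omega> * Pop3 P g (X a \<omega>)) \<in> borel_measurable Pr" using As by measurable
    show "(\<lambda>\<omega>. indicator A \<omega> * Pop3 P (?T n) (X a \<omega>)) \<in> borel_measurable Pr" for n
      using As by measurable
    show "AE \<omega> in Pr. (\<lambda>n. indicator A \<omega> * Pop3 P (?T n) (X a \<omega>)) \<longlonglongrightarrow> indicator A \<omega> * Pop3 P g (X a \<omega>)"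
      by (intro AE_I2 tendsto_mult tendsto_const Pop3_trunc_X_tendsto[OF _ g int_P])
    show "AE \<omega> in Pr. norm (indicator A \<omega> * Pop3 P (?T n) (X a \<omega>)) \<le> \<Phi> (X a \<omega>)" for n
      using abs_Pop3_trunc_X_le[OF _ g int_P \<Phi>]
      by (intro AE_I2) (auto simp: indicator_def intro: order_trans[OF abs_ge_zero])
  qed (rule int_\<Phi>)
  show ?thesis
    using LIMSEQ_unique[OF tendsto_integral_indicator_trunc[OF int_g As, unfolded eq] R] .
qed

lemma integral_pair_centered:
  assumes a: "a \<in> Gen k" and b: "b \<in> Gen k" and ab: "a \<noteq> b"
    and g: "(\<lambda>(x, y, z). g x y z) \<in> borel_measurable (M \<Otimes>\<^sub>M M \<Otimes>\<^sub>M M)"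
    and int_P: "\<And>x. x \<in> space M \<Longrightarrow> integrable (P x) (\<lambda>yz. g x (fst yz) (snd yz))"
    and centered: "\<And>x. x \<in> space M \<Longrightarrow> Pop3 P g x = 0"
    and \<Phi>: "\<And>x. x \<in> space M \<Longrightarrow> (\<integral>yz. \<bar>g x (fst yz) (snd yz)\<bar> \<partial>P x) \<le> \<Phi> x"
    and int_\<Phi>: "integrable Pr (\<lambda>\<omega>. \<Phi> (X a \<omega>) * \<Phi> (X b \<omega>))"
    and int_g: "integrable Pr (\<lambda>\<omega>. g (X a \<omega>) (X (a @ [False]) \<omega>) (X (a @ [True]) \<omega>)
                                 * g (X b \<omega>) (X (b @ [False]) \<omega>) (X (b @ [True]) \<omega>))"
  shows "(\<integral>\<omega>. g (X a \<omega>) (X (a @ [False]) \<omega>) (X (a @ [True]) \<omega>)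
             * g (X b \<omega>) (X (b @ [False]) \<omega>) (X (b @ [True]) \<omega>) \<partial>Pr) = 0"
proof -
  let ?G = "\<lambda>i \<omega>. g (X i \<omega>) (X (i @ [False]) \<omega>) (X (i @ [True]) \<omega>)"
  let ?T = "\<lambda>n x y z. trunc n (g x y z)"
  have eq: "(\<integral>\<omega>. trunc n (?G a \<omega>) * trunc n (?G b \<omega>) \<partial>Pr)
      = (\<integral>\<omega>. Pop3 P (?T n) (X a \<omega>) * Pop3 P (?T n) (X b \<omega>) \<partial>Pr)" for n
    by (rule integral_pair_bounded[OF a b ab measurable_trunc3[OF g] abs_trunc_le_index])
  have L: "(\<lambda>n. \<integral>\<omega>. trunc n (?G a \<omega>) * trunc n (?G b \<omega>) \<partial>Pr) \<longlonglongrightarrow> (\<integral>\<omega>. ?G a \<omega> * ?G b \<omega> \<partial>Pr)"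
    by (rule tendsto_integral_trunc_mult_trunc[OF measurable_X3[OF g] measurable_X3[OF g] int_g])
  have R: "(\<lambda>n. \<integral>\<omega>. Pop3 P (?T n) (X a \<omega>) * Pop3 P (?T n) (X b \<omega>) \<partial>Pr)
      \<longlonglongrightarrow> (\<integral>\<omega>. Pop3 P g (X a \<omega>) * Pop3 P g (X b \<omega>) \<partial>Pr)"
  proof (rule integral_dominated_convergence[where w="\<lambda>\<omega>. \<Phi> (X a \<omega>) * \<Phi> (X b \<omega>)"])
    have [measurable]: "(\<lambda>\<omega>. Pop3 P g (X i \<omega>)) \<in> borel_measurable Pr"
      "(\<lambda>\<omega>. Pop3 P (?T n) (X i \<omega>)) \<in> borel_measurable Pr" for n i
      by (intro measurable_Pop3_X g measurable_trunc3)+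
    show "(\<lambda>\<omega>. Pop3 P g (X a \<omega>) * Pop3 P g (X b \<omega>)) \<in> borel_measurable Pr" by measurable
    show "(\<lambda>\<omega>. Pop3 P (?T n) (X a \<omega>) * Pop3 P (?T n) (X b \<omega>)) \<in> borel_measurable Pr" for n
      by measurable
    show "AE \<omega> in Pr. (\<lambda>n. Pop3 P (?T n) (X a \<omega>) * Pop3 P (?T n) (X b \<omega>))
        \<longlonglongrightarrow> Pop3 P g (X a \<omega>) * Pop3 P g (X b \<omega>)"
      by (intro AE_I2 tendsto_mult Pop3_trunc_X_tendsto[OF _ g int_P])
    show "AE \<omega> in Pr. norm (Pop3 P (?T n) (X a \<omega>) * Pop3 P (?T n) (X b \<omega>)) \<le> \<Phi> (X a \<omega>) * \<Phi> (X b \<omega>)" for n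
      using abs_Pop3_trunc_X_le[OF _ g int_P \<Phi>]
      by (intro AE_I2) (auto simp: abs_mult intro!: mult_mono order_trans[OF abs_ge_zero])
  qed (rule int_\<Phi>)
  have "(\<integral>\<omega>. Pop3 P g (X a \<omega>) * Pop3 P g (X b \<omega>) \<partial>Pr) = 0"
    by (subst Bochner_Integration.integral_cong[where g="\<lambda>_. 0"]) (auto simp: centered X_in_space)
  then show ?thesis using LIMSEQ_unique[OF L[unfolded eq] R] by simp
qed

lemma child_X: "child b u (X a \<omega>) (X (a @ [False]) \<omega>) (X (a @ [True]) \<omega>) = u (X (a @ [b]) \<omega>)"
  by (cases b) (simp_all add: child_def)

lemma integral_trunc_child_le:
  assumes w: "w \<in> F" and nonneg: "\<And>x. 0 \<le> w x"
    and int: "integrable Pr (\<lambda>\<omega>. Pop3 P (child b w) (X a \<omega>))"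
  shows "(\<integral>\<omega>. trunc n (w (X (a @ [b]) \<omega>)) \<partial>Pr) \<le> (\<integral>\<omega>. Pop3 P (child b w) (X a \<omega>) \<partial>Pr)"
proof -
  have a: "a \<in> Gen (length a)" by (simp add: Gen_def)
  have child_meas: "(\<lambda>(x, y, z). child b w x y z) \<in> borel_measurable (M \<Otimes>\<^sub>M M \<Otimes>\<^sub>M M)"
    by (rule measurable_child[OF F_measurable[OF w]])
  note trunc_meas = measurable_trunc3[OF child_meas, of n]
  have "(\<integral>\<omega>. trunc n (w (X (a @ [b]) \<omega>)) \<partial>Pr)
      = (\<integral>\<omega>. Pop3 P (\<lambda>x y z. trunc n (child b w x y z)) (X a \<omega>) \<partial>Pr)"
    using integral_indicator_vertex_bounded[OF a space_in_sets_H trunc_meas abs_trunc_le_index]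
    by (simp add: integral_indicator_space child_X)
  also have "\<dots> \<le> (\<integral>\<omega>. Pop3 P (child b w) (X a \<omega>) \<partial>Pr)"
  proof (rule integral_mono[OF integrable_Pop3_X_bounded[OF trunc_meas abs_trunc_le_index] int])
    fix \<omega> assume \<omega>: "\<omega> \<in> space Pr"
    interpret Px: prob_space "P (X a \<omega>)" by (rule prob_space_P[OF X_in_space[OF \<omega>]])
    have "(\<lambda>yz. child b w (X a \<omega>) (fst yz) (snd yz)) \<in> borel_measurable (P (X a \<omega>))"
      by (rule measurable_P_section[OF X_in_space[OF \<omega>] child_meas])
    then show "Pop3 P (\<lambda>x y z. trunc n (child b w x y z)) (X a \<omega>) \<le> Pop3 P (child b w) (X a \<omega>)"
      unfolding Pop3_def
      by (intro integral_mono Px.integrable_trunc integrable_P_child[OF w X_in_space[OF \<omega>]])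
         (simp_all add: trunc_le nonneg child_def)
  qed
  finally show ?thesis .
qed

lemma integrable_F_X: "u \<in> F \<Longrightarrow> integrable Pr (\<lambda>\<omega>. u (X i \<omega>))"
proof (induction i arbitrary: u rule: rev_induct)
  case Nil
  then show ?case
    using integrable_nu_F[OF Nil] integrable_distr_eq[OF measurable_X[of "[]"] F_measurable[OF Nil]] distr_X_root
    by simp
next
  case (snoc b a)
  \<comment> \<open>\<open>w\<close> dominates \<open>\<bar>u\<bar>\<close> and is nonnegative, so monotone convergence applies to its truncations.\<close>
  define w where "w = (\<lambda>x. (u x)\<^sup>2 + 1)"
  have w: "w \<in> F" unfolding w_def by (rule sq_plus_one_F[OF snoc.prems])
  have w_meas: "(\<lambda>\<omega>. w (X (a @ [b]) \<omega>)) \<in> borel_measurable Pr"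
    using F_measurable[OF w] by measurable
  have "integrable Pr (\<lambda>\<omega>. w (X (a @ [b]) \<omega>))"
  proof (rule integrable_of_bounded_trunc_integrals[OF w_meas])
    show "0 \<le> w (X (a @ [b]) \<omega>)" for \<omega> by (simp add: w_def)
    show "(\<integral>\<omega>. trunc n (w (X (a @ [b]) \<omega>)) \<partial>Pr) \<le> (\<integral>\<omega>. Pop3 P (child b w) (X a \<omega>) \<partial>Pr)" for n
      by (rule integral_trunc_child_le[OF w _ snoc.IH[OF Pop3_child_F[OF w]]]) (simp add: w_def)
  qed
  then show ?case
    by (rule Bochner_Integration.integrable_bound)
       (use F_measurable[OF snoc.prems] abs_le_sq_plus_one in \<open>auto simp: w_def\<close>)
qed

lemma integral_indicator_child:
  assumes u: "u \<in> F" and a: "a \<in> Gen k" and A: "A \<in> sets (H k)"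
  shows "(\<integral>\<omega>. indicator A \<omega> * u (X (a @ [b]) \<omega>) \<partial>Pr)
       = (\<integral>\<omega>. indicator A \<omega> * Pop3 P (child b u) (X a \<omega>) \<partial>Pr)"
proof -
  define w where "w = (\<lambda>x. (u x)\<^sup>2 + 1)"
  have w: "w \<in> F" unfolding w_def by (rule sq_plus_one_F[OF u])
  have "(\<integral>\<omega>. indicator A \<omega> * child b u (X a \<omega>) (X (a @ [False]) \<omega>) (X (a @ [True]) \<omega>) \<partial>Pr)
      = (\<integral>\<omega>. indicator A \<omega> * Pop3 P (child b u) (X a \<omega>) \<partial>Pr)"
  proof (rule integral_indicator_vertex[OF a A measurable_child[OF F_measurable[OF u]]])
    show "integrable Pr (\<lambda>\<omega>. Pop3 P (child b w) (X a \<omega>))"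
      by (rule integrable_F_X[OF Pop3_child_F[OF w]])
    show "integrable Pr (\<lambda>\<omega>. child b u (X a \<omega>) (X (a @ [False]) \<omega>) (X (a @ [True]) \<omega>))"
      using integrable_F_X[OF u] by (simp add: child_X)
    fix x assume x: "x \<in> space M"
    show "integrable (P x) (\<lambda>yz. child b u x (fst yz) (snd yz))" by (rule integrable_P_child[OF u x])
    show "(\<integral>yz. \<bar>child b u x (fst yz) (snd yz)\<bar> \<partial>P x) \<le> Pop3 P (child b w) x"
      unfolding Pop3_def
      by (rule integral_mono)
         (use integrable_P_child[OF u x] integrable_P_child[OF w x] abs_le_sq_plus_one
           in \<open>auto simp: w_def child_def\<close>)
  qed
  then show ?thesis by (simp add: child_X)
qed

lemma sum_integral_indicator_Gen_Suc:
  assumes u: "u \<in> F" and A: "A \<in> sets (H n)"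
  shows "(\<Sum>i\<in>Gen (Suc n). \<integral>\<omega>. indicator A \<omega> * u (X i \<omega>) \<partial>Pr)
       = 2 * (\<Sum>a\<in>Gen n. \<integral>\<omega>. indicator A \<omega> * Qreal P u (X a \<omega>) \<partial>Pr)"
proof -
  have As: "A \<in> sets Pr" using A sets_H_subset by blast
  have "(\<integral>\<omega>. indicator A \<omega> * u (X (a @ [False]) \<omega>) \<partial>Pr) + (\<integral>\<omega>. indicator A \<omega> * u (X (a @ [True]) \<omega>) \<partial>Pr)
      = 2 * (\<integral>\<omega>. indicator A \<omega> * Qreal P u (X a \<omega>) \<partial>Pr)" if a: "a \<in> Gen n" for a
  proof -
    have int: "integrable Pr (\<lambda>\<omega>. indicator A \<omega> * Pop3 P (child b u) (X a \<omega>))" for b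
      using integrable_mult_indicator[OF As integrable_F_X[OF Pop3_child_F[OF u]]] by simp
    have "(\<integral>\<omega>. indicator A \<omega> * u (X (a @ [False]) \<omega>) \<partial>Pr) + (\<integral>\<omega>. indicator A \<omega> * u (X (a @ [True]) \<omega>) \<partial>Pr)
        = (\<integral>\<omega>. indicator A \<omega> * Pop3 P (child False u) (X a \<omega>)
              + indicator A \<omega> * Pop3 P (child True u) (X a \<omega>) \<partial>Pr)"
      using int by (simp add: integral_indicator_child[OF u a A])
    also have "\<dots> = (\<integral>\<omega>. 2 * (indicator A \<omega> * Qreal P u (X a \<omega>)) \<partial>Pr)"
      by (rule Bochner_Integration.integral_cong) (simp_all add: Qreal_def algebra_simps)
    finally show ?thesis by simp
  qed
  then show ?thesis unfolding sum_Gen_Suc by (simp add: sum_distrib_left)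
qed

lemma sum_integral_Gen: "u \<in> F \<Longrightarrow> (\<Sum>i\<in>Gen n. \<integral>\<omega>. u (X i \<omega>) \<partial>Pr) = 2 ^ n * (\<integral>x. (Qreal P ^^ n) u x \<partial>\<nu>)"
proof (induction n arbitrary: u)
  case 0
  then show ?case
    using integral_distr[OF measurable_X[of "[]"] F_measurable[OF 0]] distr_X_root by (simp add: Gen_0)
next
  case (Suc n)
  have "(\<Sum>i\<in>Gen (Suc n). \<integral>\<omega>. u (X i \<omega>) \<partial>Pr) = 2 * (\<Sum>a\<in>Gen n. \<integral>\<omega>. Qreal P u (X a \<omega>) \<partial>Pr)"
    using sum_integral_indicator_Gen_Suc[OF Suc.prems space_in_sets_H] by (simp add: integral_indicator_space)
  also have "\<dots> = 2 ^ Suc n * (\<integral>x. (Qreal P ^^ Suc n) u x \<partial>\<nu>)"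
    using Suc.IH[OF Qreal_F[OF Suc.prems]] by (simp add: funpow_Suc_right del: funpow.simps)
  finally show ?case .
qed

lemma Re_CF: "h \<in> CF F \<Longrightarrow> (\<lambda>x. Re (h x)) \<in> F"
  and Im_CF: "h \<in> CF F \<Longrightarrow> (\<lambda>x. Im (h x)) \<in> F"
  by (simp_all add: CF_def)

lemma CF_of_real: "u \<in> F \<Longrightarrow> (\<lambda>x. complex_of_real (u x)) \<in> CF F"
  using F_const[of 0] by (simp add: CF_def)

lemma CF_cmult:
  assumes h: "h \<in> CF F"
  shows "(\<lambda>x. c * h x) \<in> CF F"
proof -
  have "(\<lambda>x. Re c * Re (h x) - Im c * Im (h x)) \<in> F" "(\<lambda>x. Re c * Im (h x) + Im c * Re (h x)) \<in> F"
    by (intro F_diff F_add F_cmult Re_CF Im_CF h)+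
  then show ?thesis by (simp add: CF_def)
qed

lemma cmod_sq_CF: "h \<in> CF F \<Longrightarrow> (\<lambda>x. (cmod (h x))\<^sup>2) \<in> F"
  unfolding cmod_power2 by (intro F_add F_sq Re_CF Im_CF)

lemma CF_measurable: "h \<in> CF F \<Longrightarrow> h \<in> borel_measurable M"
  using F_measurable[OF Re_CF] F_measurable[OF Im_CF] by (simp add: borel_measurable_complex_iff)

lemma integrable_nu_CF: "h \<in> CF F \<Longrightarrow> integrable \<nu> h"
  by (intro integrable_complex_iff[THEN iffD2] conjI integrable_nu_F Re_CF Im_CF)

lemma integrable_CF_X: "h \<in> CF F \<Longrightarrow> integrable Pr (\<lambda>\<omega>. h (X i \<omega>))"
  by (intro integrable_complex_iff[THEN iffD2] conjI integrable_F_X[OF Re_CF] integrable_F_X[OF Im_CF])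

lemma Qop_CF:
  assumes h: "h \<in> CF F" and x: "x \<in> space M"
  shows "Qop P h x = Complex (Qreal P (\<lambda>y. Re (h y)) x) (Qreal P (\<lambda>y. Im (h y)) x)"
proof -
  have "integrable (P x) (\<lambda>yz. h (if b then snd yz else fst yz))" for b
    using integrable_P_child[OF Re_CF[OF h] x, of b] integrable_P_child[OF Im_CF[OF h] x, of b]
    by (intro integrable_complex_iff[THEN iffD2]) (simp add: child_def)
  from this[of False] this[of True] show ?thesis
    unfolding Qop_def Qreal_def Pop3_child_False Pop3_child_True complex_eq_iff by simp
qed

lemma integral_abs_children_le:
  assumes u: "u \<in> F" and x: "x \<in> space M"
  shows "(\<integral>yz. \<bar>u (fst yz) + u (snd yz) + c\<bar> \<partial>P x) \<le> 2 * Qreal P (\<lambda>y. (u y)\<^sup>2 + 1) x + c\<^sup>2 + 1"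
proof -
  interpret Px: prob_space "P x" by (rule prob_space_P[OF x])
  define w where "w = (\<lambda>y. (u y)\<^sup>2 + 1)"
  have int: "integrable (P x) (\<lambda>yz. v (fst yz))" "integrable (P x) (\<lambda>yz. v (snd yz))" if "v \<in> F" for v
    using integrable_P_child[OF that x, of False] integrable_P_child[OF that x, of True]
    by (simp_all add: child_def)
  have w: "w \<in> F" unfolding w_def by (rule sq_plus_one_F[OF u])
  have "(\<integral>yz. \<bar>u (fst yz) + u (snd yz) + c\<bar> \<partial>P x) \<le> (\<integral>yz. w (fst yz) + w (snd yz) + (c\<^sup>2 + 1) \<partial>P x)"
  proof (rule integral_mono)
    fix yz
    show "\<bar>u (fst yz) + u (snd yz) + c\<bar> \<le> w (fst yz) + w (snd yz) + (c\<^sup>2 + 1)"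
      using abs_le_sq_plus_one[of "u (fst yz)"] abs_le_sq_plus_one[of "u (snd yz)"] abs_le_sq_plus_one[of c]
      unfolding w_def by linarith
  qed (use int[OF u] int[OF w] in auto)
  also have "\<dots> = 2 * Qreal P w x + c\<^sup>2 + 1"
    using int[OF w] by (simp add: Qreal_def Pop3_child_False Pop3_child_True Px.prob_space)
  finally show ?thesis unfolding w_def .
qed

text \<open>With v = - 2 Q u, the innovation of vertex a is the sum over its two children minus its
  conditional mean given the generation of a.\<close>

definition innovation :: "('s \<Rightarrow> 'a :: plus) \<Rightarrow> ('s \<Rightarrow> 'a) \<Rightarrow> bool list \<Rightarrow> 'w \<Rightarrow> 'a" where
  "innovation u v a \<omega> = u (X (a @ [False]) \<omega>) + u (X (a @ [True]) \<omega>) + v (X a \<omega>)"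

lemma measurable_innovation: "u \<in> F \<Longrightarrow> v \<in> F \<Longrightarrow> innovation u v a \<in> borel_measurable Pr"
  unfolding innovation_def[abs_def] using F_measurable[of u] F_measurable[of v] by measurable

lemma integrable_sq_innovation:
  assumes u: "u \<in> F" and v: "v \<in> F"
  shows "integrable Pr (\<lambda>\<omega>. (innovation u v a \<omega>)\<^sup>2)"
proof (rule Bochner_Integration.integrable_bound)
  show "integrable Pr (\<lambda>\<omega>. 3 * ((u (X (a @ [False]) \<omega>))\<^sup>2 + (u (X (a @ [True]) \<omega>))\<^sup>2 + (v (X a \<omega>))\<^sup>2))"
    using integrable_F_X[OF F_sq[OF u]] integrable_F_X[OF F_sq[OF v]] by auto
  show "(\<lambda>\<omega>. (innovation u v a \<omega>)\<^sup>2) \<in> borel_measurable Pr"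
    using measurable_innovation[OF u v] by measurable
qed (use sq_sum3_le in \<open>auto simp: innovation_def\<close>)

lemma integrable_innovation_mult:
  "u \<in> F \<Longrightarrow> v \<in> F \<Longrightarrow> integrable Pr (\<lambda>\<omega>. innovation u v a \<omega> * innovation u v b \<omega>)"
  by (intro integrable_mult_of_integrable_sq measurable_innovation integrable_sq_innovation)

lemma integrable_sq_sum_innovation:
  "u \<in> F \<Longrightarrow> v \<in> F \<Longrightarrow> integrable Pr (\<lambda>\<omega>. (\<Sum>a\<in>Gen k. innovation u v a \<omega>)\<^sup>2)"
  unfolding power2_eq_square sum_product by (intro Bochner_Integration.integrable_sum integrable_innovation_mult)

lemma integral_innovation_mult_eq_0:
  assumes u: "u \<in> F" and v: "v \<in> F" and centered: "\<And>x. x \<in> space M \<Longrightarrow> 2 * Qreal P u x + v x = 0"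
    and a: "a \<in> Gen k" and b: "b \<in> Gen k" and ab: "a \<noteq> b"
  shows "(\<integral>\<omega>. innovation u v a \<omega> * innovation u v b \<omega> \<partial>Pr) = 0"
proof -
  define \<Phi> where "\<Phi> x = 2 * Qreal P (\<lambda>y. (u y)\<^sup>2 + 1) x + (v x)\<^sup>2 + 1" for x
  have \<Phi>: "\<Phi> \<in> F" unfolding \<Phi>_def[abs_def] by (intro F_add F_cmult Qreal_F sq_plus_one_F F_sq u v F_const)
  have int: "integrable (P x) (\<lambda>yz. u (if b then snd yz else fst yz))" if "x \<in> space M" for x b
    using integrable_P_child[OF u that, of b] by (simp add: child_def)
  have "(\<integral>\<omega>. (\<lambda>x y z. u y + u z + v x) (X a \<omega>) (X (a @ [False]) \<omega>) (X (a @ [True]) \<omega>)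
           * (\<lambda>x y z. u y + u z + v x) (X b \<omega>) (X (b @ [False]) \<omega>) (X (b @ [True]) \<omega>) \<partial>Pr) = 0"
  proof (rule integral_pair_centered[OF a b ab, where \<Phi>=\<Phi>])
    show "(\<lambda>(x, y, z). u y + u z + v x) \<in> borel_measurable (M \<Otimes>\<^sub>M M \<Otimes>\<^sub>M M)"
      using F_measurable[OF u] F_measurable[OF v] by measurable
    fix x assume x: "x \<in> space M"
    interpret Px: prob_space "P x" by (rule prob_space_P[OF x])
    show "integrable (P x) (\<lambda>yz. u (fst yz) + u (snd yz) + v x)"
      using int[OF x, of False] int[OF x, of True] by auto
    show "Pop3 P (\<lambda>x y z. u y + u z + v x) x = 0"
      using centered[OF x] int[OF x, of False] int[OF x, of True]
      by (simp add: Pop3_def Qreal_def child_def Px.prob_space field_simps)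
    show "(\<integral>yz. \<bar>u (fst yz) + u (snd yz) + v x\<bar> \<partial>P x) \<le> \<Phi> x"
      unfolding \<Phi>_def by (rule integral_abs_children_le[OF u x])
  next
    show "integrable Pr (\<lambda>\<omega>. \<Phi> (X a \<omega>) * \<Phi> (X b \<omega>))"
      by (rule integrable_mult_of_integrable_sq)
         (use F_measurable[OF \<Phi>] integrable_F_X[OF F_sq[OF \<Phi>]] in auto)
    show "integrable Pr (\<lambda>\<omega>. (u (X (a @ [False]) \<omega>) + u (X (a @ [True]) \<omega>) + v (X a \<omega>))
                             * (u (X (b @ [False]) \<omega>) + u (X (b @ [True]) \<omega>) + v (X b \<omega>)))"
      using integrable_innovation_mult[OF u v, of a b] by (simp add: innovation_def)
  qed
  then show ?thesis by (simp add: innovation_def)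
qed

lemma integral_sq_sum_innovation:
  assumes u: "u \<in> F" and v: "v \<in> F" and centered: "\<And>x. x \<in> space M \<Longrightarrow> 2 * Qreal P u x + v x = 0"
  shows "(\<integral>\<omega>. (\<Sum>a\<in>Gen k. innovation u v a \<omega>)\<^sup>2 \<partial>Pr) = (\<Sum>a\<in>Gen k. \<integral>\<omega>. (innovation u v a \<omega>)\<^sup>2 \<partial>Pr)"
proof -
  have "(\<integral>\<omega>. (\<Sum>a\<in>Gen k. innovation u v a \<omega>)\<^sup>2 \<partial>Pr)
      = (\<Sum>a\<in>Gen k. \<Sum>b\<in>Gen k. \<integral>\<omega>. innovation u v a \<omega> * innovation u v b \<omega> \<partial>Pr)"
    by (simp add: power2_eq_square sum_product Bochner_Integration.integral_sum
        Bochner_Integration.integrable_sum integrable_innovation_mult[OF u v])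
  also have "\<dots> = (\<Sum>a\<in>Gen k. \<Sum>b\<in>Gen k. if a = b then \<integral>\<omega>. (innovation u v a \<omega>)\<^sup>2 \<partial>Pr else 0)"
    by (intro sum.cong refl) (auto simp: power2_eq_square integral_innovation_mult_eq_0[OF u v centered])
  also have "\<dots> = (\<Sum>a\<in>Gen k. \<integral>\<omega>. (innovation u v a \<omega>)\<^sup>2 \<partial>Pr)"
    using finite_Gen by simp
  finally show ?thesis .
qed

lemma Re_innovation: "Re (innovation h v a \<omega>) = innovation (\<lambda>x. Re (h x)) (\<lambda>x. Re (v x)) a \<omega>"
  and Im_innovation: "Im (innovation h v a \<omega>) = innovation (\<lambda>x. Im (h x)) (\<lambda>x. Im (v x)) a \<omega>"
  by (simp_all add: innovation_def)

lemma cmod_sq_innovation: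
  "(cmod (innovation h v a \<omega>))\<^sup>2
    = (innovation (\<lambda>x. Re (h x)) (\<lambda>x. Re (v x)) a \<omega>)\<^sup>2 + (innovation (\<lambda>x. Im (h x)) (\<lambda>x. Im (v x)) a \<omega>)\<^sup>2"
  by (simp add: cmod_power2 Re_innovation Im_innovation)

lemma
  assumes h: "h \<in> CF F" and v: "v \<in> CF F"
    and centered: "\<And>x. x \<in> space M \<Longrightarrow> 2 * Qop P h x + v x = 0"
  shows integrable_cmod_sq_sum_innovation:
      "integrable Pr (\<lambda>\<omega>. (cmod (\<Sum>a\<in>Gen k. innovation h v a \<omega>))\<^sup>2)"
    and integral_cmod_sq_sum_innovation:
      "(\<integral>\<omega>. (cmod (\<Sum>a\<in>Gen k. innovation h v a \<omega>))\<^sup>2 \<partial>Pr)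
        = (\<Sum>a\<in>Gen k. \<integral>\<omega>. (cmod (innovation h v a \<omega>))\<^sup>2 \<partial>Pr)"
proof -
  let ?Re = "innovation (\<lambda>x. Re (h x)) (\<lambda>x. Re (v x))" and ?Im = "innovation (\<lambda>x. Im (h x)) (\<lambda>x. Im (v x))"
  have "2 * Qreal P (\<lambda>y. Re (h y)) x + Re (v x) = 0" "2 * Qreal P (\<lambda>y. Im (h y)) x + Im (v x) = 0"
    if "x \<in> space M" for x
    using centered[OF that] Qop_CF[OF h that] by (simp_all add: complex_eq_iff)
  note sum_sq = integral_sq_sum_innovation[OF Re_CF[OF h] Re_CF[OF v] this(1)]
    integral_sq_sum_innovation[OF Im_CF[OF h] Im_CF[OF v] this(2)]
  note int = integrable_sq_sum_innovation[OF Re_CF[OF h] Re_CF[OF v], of k]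
    integrable_sq_sum_innovation[OF Im_CF[OF h] Im_CF[OF v], of k]
  have sq: "(cmod (\<Sum>a\<in>Gen k. innovation h v a \<omega>))\<^sup>2 = (\<Sum>a\<in>Gen k. ?Re a \<omega>)\<^sup>2 + (\<Sum>a\<in>Gen k. ?Im a \<omega>)\<^sup>2" for \<omega>
    by (simp add: cmod_power2 Re_sum Im_sum Re_innovation Im_innovation)
  show "integrable Pr (\<lambda>\<omega>. (cmod (\<Sum>a\<in>Gen k. innovation h v a \<omega>))\<^sup>2)"
    unfolding sq using int by simp
  have "(\<integral>\<omega>. (cmod (\<Sum>a\<in>Gen k. innovation h v a \<omega>))\<^sup>2 \<partial>Pr)
      = (\<Sum>a\<in>Gen k. \<integral>\<omega>. (?Re a \<omega>)\<^sup>2 \<partial>Pr) + (\<Sum>a\<in>Gen k. \<integral>\<omega>. (?Im a \<omega>)\<^sup>2 \<partial>Pr)"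
    unfolding sq using int sum_sq by simp
  also have "\<dots> = (\<Sum>a\<in>Gen k. \<integral>\<omega>. (cmod (innovation h v a \<omega>))\<^sup>2 \<partial>Pr)"
    unfolding cmod_sq_innovation sum.distrib[symmetric]
    by (intro sum.cong refl Bochner_Integration.integral_add[symmetric] integrable_sq_innovation
        Re_CF Im_CF h v)
  finally show "(\<integral>\<omega>. (cmod (\<Sum>a\<in>Gen k. innovation h v a \<omega>))\<^sup>2 \<partial>Pr)
      = (\<Sum>a\<in>Gen k. \<integral>\<omega>. (cmod (innovation h v a \<omega>))\<^sup>2 \<partial>Pr)" .
qed

lemma integral_cmod_sq_innovation_le:
  assumes h: "h \<in> CF F" and v: "v \<in> CF F"
  shows "(\<integral>\<omega>. (cmod (innovation h v a \<omega>))\<^sup>2 \<partial>Pr)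
    \<le> 3 * ((\<integral>\<omega>. (cmod (h (X (a @ [False]) \<omega>)))\<^sup>2 \<partial>Pr) + (\<integral>\<omega>. (cmod (h (X (a @ [True]) \<omega>)))\<^sup>2 \<partial>Pr)
           + (\<integral>\<omega>. (cmod (v (X a \<omega>)))\<^sup>2 \<partial>Pr))"
proof -
  have int: "integrable Pr (\<lambda>\<omega>. (cmod (g (X i \<omega>)))\<^sup>2)" if "g \<in> CF F" for g i
    by (rule integrable_F_X[OF cmod_sq_CF[OF that]])
  have "(\<integral>\<omega>. (cmod (innovation h v a \<omega>))\<^sup>2 \<partial>Pr)
      \<le> (\<integral>\<omega>. 3 * ((cmod (h (X (a @ [False]) \<omega>)))\<^sup>2 + (cmod (h (X (a @ [True]) \<omega>)))\<^sup>2
               + (cmod (v (X a \<omega>)))\<^sup>2) \<partial>Pr)"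
  proof (rule integral_mono)
    show "integrable Pr (\<lambda>\<omega>. (cmod (innovation h v a \<omega>))\<^sup>2)"
      unfolding cmod_sq_innovation
      by (intro Bochner_Integration.integrable_add integrable_sq_innovation Re_CF Im_CF h v)
  qed (use int[OF h] int[OF v] norm_sq_sum3_le in \<open>auto simp: innovation_def\<close>)
  also have "\<dots> = 3 * ((\<integral>\<omega>. (cmod (h (X (a @ [False]) \<omega>)))\<^sup>2 \<partial>Pr)
      + (\<integral>\<omega>. (cmod (h (X (a @ [True]) \<omega>)))\<^sup>2 \<partial>Pr) + (\<integral>\<omega>. (cmod (v (X a \<omega>)))\<^sup>2 \<partial>Pr))"
    using int[OF h] int[OF v] by simp
  finally show ?thesis .
qed

lemma integral_Qreal_iter_bounded:
  assumes F3: "assmF3 M P F \<mu> \<alpha> J alj R \<beta>" and u: "u \<in> F"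
  shows "\<exists>K. \<forall>n. (\<integral>x. (Qreal P ^^ n) u x \<partial>\<nu>) \<le> K"
proof -
  define u' where "u' = (\<lambda>y. complex_of_real (u y))"
  obtain g where g: "g \<in> F" and close: "\<And>n x. x \<in> space M \<Longrightarrow>
      cmod ((Qop P ^^ n) u' x - complex_of_real (integral\<^sup>L \<mu> u)
        - complex_of_real (\<alpha> ^ n) * (\<Sum>j\<in>J. (alj j / complex_of_real \<alpha>) ^ n * R j u' x))
      \<le> \<beta> n * \<alpha> ^ n * g x"
    using assmF3_expansion[OF F3 u] unfolding u'_def by blast
  define B where "B x = cmod (complex_of_real (integral\<^sup>L \<mu> u)) + (\<Sum>j\<in>J. cmod (R j u' x)) + \<bar>g x\<bar>" for x
  have pointwise: "(Qreal P ^^ n) u x \<le> B x" if x: "x \<in> space M" for n x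
  proof -
    have "Re ((Qop P ^^ n) u' x) \<le> B x"
      unfolding B_def
      by (rule Re_le_of_expansion_bound[OF close[OF x]])
         (use assmF3_alpha_pos[OF F3] assmF3_alpha_less_one[OF F3] assmF3_beta[OF F3]
              assmF3_cmod[OF F3] in \<open>auto simp: norm_divide less_imp_le\<close>)
    then show ?thesis by (simp add: u'_def Qop_iter_of_real)
  qed
  have "R j u' \<in> CF F" if "j \<in> J" for j
    unfolding u'_def by (rule assmF3_R_CF[OF F3 that CF_of_real[OF u]])
  then have B_int: "integrable \<nu> B"
    unfolding B_def
    by (intro Bochner_Integration.integrable_add Bochner_Integration.integrable_sum integrable_norm
        integrable_abs integrable_nu_F g integrable_nu_CF CF_of_real F_const)
  have "(\<integral>x. (Qreal P ^^ n) u x \<partial>\<nu>) \<le> integral\<^sup>L \<nu> B" for n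
    by (rule integral_mono[OF integrable_nu_F[OF Qreal_iter_F[OF u]] B_int]) (simp add: pointwise space_nu)
  then show ?thesis by blast
qed

end

section \<open>The martingale of an eigenfunction of \<open>Q\<close>\<close>

locale bmc_eigen = bmc Pr M P \<nu> X F
  for Pr :: "'w measure" and M :: "'s measure" and P :: "'s \<Rightarrow> ('s \<times> 's) measure"
    and \<nu> :: "'s measure" and X :: "bool list \<Rightarrow> 'w \<Rightarrow> 's" and F :: "('s \<Rightarrow> real) set" +
  fixes h :: "'s \<Rightarrow> complex" and c :: complex
  assumes h_CF: "h \<in> CF F"
    and eigen: "\<And>x. x \<in> space M \<Longrightarrow> Qop P h x = c * h x"
    and c_nonzero: "c \<noteq> 0"
begin

definition eigen_martingale :: "nat \<Rightarrow> 'w \<Rightarrow> complex" where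
  "eigen_martingale n \<omega> = inverse ((2 * c) ^ n) * (\<Sum>i\<in>Gen n. h (X i \<omega>))"

lemma eigen_martingale_measurable: "eigen_martingale n \<in> borel_measurable (H n)"
proof -
  have "(\<lambda>\<omega>. h (X i \<omega>)) \<in> borel_measurable (H n)" if "i \<in> Gen n" for i
    using measurable_compose[OF measurable_X_H[OF subsetD[OF Gen_subset_Tn that]] CF_measurable[OF h_CF]]
    by (simp add: comp_def)
  then have "(\<lambda>\<omega>. \<Sum>i\<in>Gen n. h (X i \<omega>)) \<in> borel_measurable (H n)"
    by (rule borel_measurable_sum)
  then show ?thesis unfolding eigen_martingale_def[abs_def] by measurable
qed

lemma integrable_eigen_martingale: "integrable Pr (eigen_martingale n)"
  unfolding eigen_martingale_def[abs_def]
  by (intro integrable_mult_right Bochner_Integration.integrable_sum integrable_CF_X h_CF)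

lemma sum_integral_indicator_Gen_Suc_eigen:
  assumes A: "A \<in> sets (H n)"
  shows "(\<Sum>i\<in>Gen (Suc n). \<integral>\<omega>. indicator A \<omega> *\<^sub>R h (X i \<omega>) \<partial>Pr)
       = 2 * c * (\<Sum>a\<in>Gen n. \<integral>\<omega>. indicator A \<omega> *\<^sub>R h (X a \<omega>) \<partial>Pr)"
proof -
  have As: "A \<in> sets Pr" using A sets_H_subset by blast
  have ch: "(\<lambda>x. c * h x) \<in> CF F" by (rule CF_cmult[OF h_CF])
  have int: "integrable Pr (\<lambda>\<omega>. indicator A \<omega> *\<^sub>R g (X i \<omega>))" if "g \<in> CF F" for g i
    by (rule integrable_mult_indicator[OF As integrable_CF_X[OF that]])
  have Re_int: "Re (\<integral>\<omega>. indicator A \<omega> *\<^sub>R g (X i \<omega>) \<partial>Pr) = (\<integral>\<omega>. indicator A \<omega> * Re (g (X i \<omega>)) \<partial>Pr)"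
    and Im_int: "Im (\<integral>\<omega>. indicator A \<omega> *\<^sub>R g (X i \<omega>) \<partial>Pr) = (\<integral>\<omega>. indicator A \<omega> * Im (g (X i \<omega>)) \<partial>Pr)"
    if "g \<in> CF F" for g i
    using integral_Re[OF int[OF that, of i]] integral_Im[OF int[OF that, of i]] by simp_all
  have Qreal_eigen: "Qreal P (\<lambda>y. Re (h y)) x = Re (c * h x)" "Qreal P (\<lambda>y. Im (h y)) x = Im (c * h x)"
    if "x \<in> space M" for x
    using Qop_CF[OF h_CF that] eigen[OF that] by (simp_all add: complex_eq_iff)
  have "(\<integral>\<omega>. indicator A \<omega> * Qreal P (\<lambda>y. Re (h y)) (X a \<omega>) \<partial>Pr) = (\<integral>\<omega>. indicator A \<omega> * Re (c * h (X a \<omega>)) \<partial>Pr)"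
    "(\<integral>\<omega>. indicator A \<omega> * Qreal P (\<lambda>y. Im (h y)) (X a \<omega>) \<partial>Pr) = (\<integral>\<omega>. indicator A \<omega> * Im (c * h (X a \<omega>)) \<partial>Pr)"
    for a by (auto intro!: Bochner_Integration.integral_cong simp: Qreal_eigen X_in_space)
  then have "(\<Sum>i\<in>Gen (Suc n). \<integral>\<omega>. indicator A \<omega> *\<^sub>R h (X i \<omega>) \<partial>Pr)
      = 2 * (\<Sum>a\<in>Gen n. \<integral>\<omega>. indicator A \<omega> *\<^sub>R (c * h (X a \<omega>)) \<partial>Pr)"
    using sum_integral_indicator_Gen_Suc[OF Re_CF[OF h_CF] A] sum_integral_indicator_Gen_Suc[OF Im_CF[OF h_CF] A]
      Re_int[OF h_CF] Im_int[OF h_CF] Re_int[OF ch] Im_int[OF ch]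
    by (simp add: complex_eq_iff Re_sum Im_sum)
  also have "\<dots> = 2 * c * (\<Sum>a\<in>Gen n. \<integral>\<omega>. indicator A \<omega> *\<^sub>R h (X a \<omega>) \<partial>Pr)"
    by (simp add: sum_distrib_left scaleR_conv_of_real mult_ac)
  finally show ?thesis .
qed

lemma integral_indicator_eigen_martingale_Suc:
  assumes A: "A \<in> sets (H n)"
  shows "(\<integral>\<omega>. indicator A \<omega> *\<^sub>R eigen_martingale (Suc n) \<omega> \<partial>Pr)
       = (\<integral>\<omega>. indicator A \<omega> *\<^sub>R eigen_martingale n \<omega> \<partial>Pr)"
proof -
  have As: "A \<in> sets Pr" using A sets_H_subset by blast
  have "(\<integral>\<omega>. indicator A \<omega> *\<^sub>R eigen_martingale k \<omega> \<partial>Pr)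
      = inverse ((2 * c) ^ k) * (\<Sum>i\<in>Gen k. \<integral>\<omega>. indicator A \<omega> *\<^sub>R h (X i \<omega>) \<partial>Pr)" for k
  proof -
    have "(\<integral>\<omega>. indicator A \<omega> *\<^sub>R eigen_martingale k \<omega> \<partial>Pr)
        = (\<integral>\<omega>. inverse ((2 * c) ^ k) * (\<Sum>i\<in>Gen k. indicator A \<omega> *\<^sub>R h (X i \<omega>)) \<partial>Pr)"
      by (simp add: eigen_martingale_def scaleR_sum_right[symmetric] mult_scaleR_right)
    also have "\<dots> = inverse ((2 * c) ^ k) * (\<Sum>i\<in>Gen k. \<integral>\<omega>. indicator A \<omega> *\<^sub>R h (X i \<omega>) \<partial>Pr)"
      using integrable_mult_indicator[OF As integrable_CF_X[OF h_CF]]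
      by (simp add: Bochner_Integration.integral_sum)
    finally show ?thesis .
  qed
  note integral_eq = this
  show ?thesis
    unfolding integral_eq sum_integral_indicator_Gen_Suc_eigen[OF A] using c_nonzero by (simp add: field_simps)
qed

lemma cmartingale_eigen_martingale: "cmartingale Pr H eigen_martingale"
  unfolding cmartingale_def
proof (intro conjI allI)
  fix n
  interpret fms: finite_measure_subalgebra Pr "H n" by (rule finite_measure_subalgebra_H)
  show "subalgebra Pr (H n)" by (rule subalgebra_H)
  show "sets (H n) \<subseteq> sets (H (Suc n))" by (rule sets_H_mono) simp
  show "eigen_martingale n \<in> borel_measurable (H n)" by (rule eigen_martingale_measurable)
  show "integrable Pr (eigen_martingale n)" by (rule integrable_eigen_martingale)
  have set_integral: "(\<integral>\<omega>\<in>A. Re (eigen_martingale k \<omega>) \<partial>Pr) = Re (\<integral>\<omega>. indicator A \<omega> *\<^sub>R eigen_martingale k \<omega> \<partial>Pr)"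
    "(\<integral>\<omega>\<in>A. Im (eigen_martingale k \<omega>) \<partial>Pr) = Im (\<integral>\<omega>. indicator A \<omega> *\<^sub>R eigen_martingale k \<omega> \<partial>Pr)"
    if "A \<in> sets (H n)" for A k
    using integrable_mult_indicator[OF subsetD[OF sets_H_subset that] integrable_eigen_martingale]
    by (simp_all add: set_lebesgue_integral_def integral_Re[symmetric] integral_Im[symmetric]
        del: integral_Re integral_Im)
  show "AE \<omega> in Pr. real_cond_exp Pr (H n) (\<lambda>\<omega>. Re (eigen_martingale (Suc n) \<omega>)) \<omega> = Re (eigen_martingale n \<omega>)"
    by (rule fms.real_cond_exp_charact)
       (use set_integral integral_indicator_eigen_martingale_Suc integrable_eigen_martingale
         eigen_martingale_measurable in auto)
  show "AE \<omega> in Pr. real_cond_exp Pr (H n) (\<lambda>\<omega>. Im (eigen_martingale (Suc n) \<omega>)) \<omega> = Im (eigen_martingale n \<omega>)"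
    by (rule fms.real_cond_exp_charact)
       (use set_integral integral_indicator_eigen_martingale_Suc integrable_eigen_martingale
         eigen_martingale_measurable in auto)
qed

lemma eigen_martingale_Suc_diff:
  "eigen_martingale (Suc n) \<omega> - eigen_martingale n \<omega>
    = inverse ((2 * c) ^ Suc n) * (\<Sum>a\<in>Gen n. innovation h (\<lambda>x. - (2 * c) * h x) a \<omega>)"
proof -
  have "(\<Sum>a\<in>Gen n. innovation h (\<lambda>x. - (2 * c) * h x) a \<omega>)
      = (\<Sum>i\<in>Gen (Suc n). h (X i \<omega>)) - 2 * c * (\<Sum>a\<in>Gen n. h (X a \<omega>))"
    by (simp add: innovation_def sum_Gen_Suc sum.distrib sum_subtractf sum_distrib_left)
  then show ?thesis using c_nonzero by (simp add: eigen_martingale_def field_simps)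
qed

lemma
  shows integrable_cmod_sq_eigen_martingale_diff:
      "integrable Pr (\<lambda>\<omega>. (cmod (eigen_martingale (Suc n) \<omega> - eigen_martingale n \<omega>))\<^sup>2)"
    and integral_cmod_sq_eigen_martingale_diff:
      "(\<integral>\<omega>. (cmod (eigen_martingale (Suc n) \<omega> - eigen_martingale n \<omega>))\<^sup>2 \<partial>Pr)
        = (\<Sum>a\<in>Gen n. \<integral>\<omega>. (cmod (innovation h (\<lambda>x. - (2 * c) * h x) a \<omega>))\<^sup>2 \<partial>Pr)
          / (2 * cmod c) ^ (2 * Suc n)"
proof -
  have v: "(\<lambda>x. - (2 * c) * h x) \<in> CF F" by (rule CF_cmult[OF h_CF])
  have centered: "2 * Qop P h x + - (2 * c) * h x = 0" if "x \<in> space M" for x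
    using eigen[OF that] by simp
  have sq: "(cmod (eigen_martingale (Suc n) \<omega> - eigen_martingale n \<omega>))\<^sup>2
      = (cmod (\<Sum>a\<in>Gen n. innovation h (\<lambda>x. - (2 * c) * h x) a \<omega>))\<^sup>2 / (2 * cmod c) ^ (2 * Suc n)" for \<omega>
  proof -
    have "cmod (eigen_martingale (Suc n) \<omega> - eigen_martingale n \<omega>)
        = cmod (\<Sum>a\<in>Gen n. innovation h (\<lambda>x. - (2 * c) * h x) a \<omega>) / (2 * cmod c) ^ Suc n"
      unfolding eigen_martingale_Suc_diff norm_mult norm_inverse norm_power
      by (simp add: field_simps)
    moreover have "((2 * cmod c) ^ Suc n)\<^sup>2 = (2 * cmod c) ^ (2 * Suc n)"
      by (simp only: power_mult[symmetric] mult.commute)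
    ultimately show ?thesis by (simp add: power_divide)
  qed
  show "integrable Pr (\<lambda>\<omega>. (cmod (eigen_martingale (Suc n) \<omega> - eigen_martingale n \<omega>))\<^sup>2)"
    unfolding sq using integrable_cmod_sq_sum_innovation[OF h_CF v centered] by simp
  show "(\<integral>\<omega>. (cmod (eigen_martingale (Suc n) \<omega> - eigen_martingale n \<omega>))\<^sup>2 \<partial>Pr)
      = (\<Sum>a\<in>Gen n. \<integral>\<omega>. (cmod (innovation h (\<lambda>x. - (2 * c) * h x) a \<omega>))\<^sup>2 \<partial>Pr)
        / (2 * cmod c) ^ (2 * Suc n)"
    unfolding sq using integral_cmod_sq_sum_innovation[OF h_CF v centered] by simp
qed

lemma sum_integral_cmod_sq_innovation_le:
  assumes K: "\<And>n. (\<integral>x. (Qreal P ^^ n) (\<lambda>x. (cmod (h x))\<^sup>2) x \<partial>\<nu>) \<le> K"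
  shows "(\<Sum>a\<in>Gen n. \<integral>\<omega>. (cmod (innovation h (\<lambda>x. - (2 * c) * h x) a \<omega>))\<^sup>2 \<partial>Pr)
    \<le> 3 * (2 ^ Suc n * K + 4 * (cmod c)\<^sup>2 * (2 ^ n * K))"
proof -
  define V where "V = (\<lambda>x. (cmod (h x))\<^sup>2)"
  have V: "V \<in> F" unfolding V_def by (rule cmod_sq_CF[OF h_CF])
  have sum_V: "(\<Sum>i\<in>Gen m. \<integral>\<omega>. V (X i \<omega>) \<partial>Pr) \<le> 2 ^ m * K" for m
  proof -
    have "(\<Sum>i\<in>Gen m. \<integral>\<omega>. V (X i \<omega>) \<partial>Pr) = 2 ^ m * (\<integral>x. (Qreal P ^^ m) V x \<partial>\<nu>)"
      by (rule sum_integral_Gen[OF V])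
    also have "\<dots> \<le> 2 ^ m * K" unfolding V_def by (intro mult_left_mono K) simp
    finally show ?thesis .
  qed
  have "(\<Sum>a\<in>Gen n. \<integral>\<omega>. (cmod (innovation h (\<lambda>x. - (2 * c) * h x) a \<omega>))\<^sup>2 \<partial>Pr)
      \<le> (\<Sum>a\<in>Gen n. 3 * ((\<integral>\<omega>. V (X (a @ [False]) \<omega>) \<partial>Pr) + (\<integral>\<omega>. V (X (a @ [True]) \<omega>) \<partial>Pr)
                            + 4 * (cmod c)\<^sup>2 * (\<integral>\<omega>. V (X a \<omega>) \<partial>Pr)))"
  proof (rule sum_mono)
    fix a
    have "(\<integral>\<omega>. (cmod (- (2 * c) * h (X a \<omega>)))\<^sup>2 \<partial>Pr) = 4 * (cmod c)\<^sup>2 * (\<integral>\<omega>. V (X a \<omega>) \<partial>Pr)"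
      by (simp add: V_def norm_mult power_mult_distrib)
    then show "(\<integral>\<omega>. (cmod (innovation h (\<lambda>x. - (2 * c) * h x) a \<omega>))\<^sup>2 \<partial>Pr)
        \<le> 3 * ((\<integral>\<omega>. V (X (a @ [False]) \<omega>) \<partial>Pr) + (\<integral>\<omega>. V (X (a @ [True]) \<omega>) \<partial>Pr)
              + 4 * (cmod c)\<^sup>2 * (\<integral>\<omega>. V (X a \<omega>) \<partial>Pr))"
      using integral_cmod_sq_innovation_le[OF h_CF CF_cmult[OF h_CF, of "- (2 * c)"], of a]
      by (simp add: V_def)
  qed
  also have "\<dots> = 3 * ((\<Sum>i\<in>Gen (Suc n). \<integral>\<omega>. V (X i \<omega>) \<partial>Pr)
      + 4 * (cmod c)\<^sup>2 * (\<Sum>i\<in>Gen n. \<integral>\<omega>. V (X i \<omega>) \<partial>Pr))"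
    by (simp add: sum_Gen_Suc sum.distrib sum_distrib_left algebra_simps)
  also have "\<dots> \<le> 3 * (2 ^ Suc n * K + 4 * (cmod c)\<^sup>2 * (2 ^ n * K))"
    using sum_V[of "Suc n"] sum_V[of n] by (intro mult_left_mono add_mono) auto
  finally show ?thesis .
qed

lemma conv_as_L2_eigen_martingale:
  assumes c: "1 / sqrt 2 < cmod c"
    and K: "\<And>n. (\<integral>x. (Qreal P ^^ n) (\<lambda>x. (cmod (h x))\<^sup>2) x \<partial>\<nu>) \<le> K"
  shows "\<exists>Minf. conv_as_L2 Pr eigen_martingale Minf"
proof -
  define q where "q = 1 / (2 * (cmod c)\<^sup>2)"
  define C where "C = 3 * K * (2 + 4 * (cmod c)\<^sup>2) / (4 * (cmod c)\<^sup>2)"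
  have "(1 / sqrt 2)\<^sup>2 < (cmod c)\<^sup>2" using c by (intro power_strict_mono) auto
  then have c2: "1 / 2 < (cmod c)\<^sup>2" by (simp add: power_divide)
  have q: "0 < q" "q < 1" using c2 by (auto simp: q_def divide_less_eq_1)
  have bound: "(\<integral>\<omega>. (cmod (eigen_martingale (Suc n) \<omega> - eigen_martingale n \<omega>))\<^sup>2 \<partial>Pr) \<le> C * q ^ n" for n
  proof -
    have pos: "0 < (2 * cmod c) ^ (2 * Suc n)" using c_nonzero by simp
    have "(\<integral>\<omega>. (cmod (eigen_martingale (Suc n) \<omega> - eigen_martingale n \<omega>))\<^sup>2 \<partial>Pr)
        \<le> 3 * (2 ^ Suc n * K + 4 * (cmod c)\<^sup>2 * (2 ^ n * K)) / (2 * cmod c) ^ (2 * Suc n)"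
      unfolding integral_cmod_sq_eigen_martingale_diff
      by (intro divide_right_mono sum_integral_cmod_sq_innovation_le K) (use pos in simp)
    also have "\<dots> = C * q ^ n"
    proof -
      have denominator: "(2 * cmod c) ^ (2 * Suc n) = (4 * (cmod c)\<^sup>2) * (4 * (cmod c)\<^sup>2) ^ n"
        by (simp add: power_mult power_mult_distrib power2_eq_square)
      have q_power: "q ^ n = 2 ^ n / (4 * (cmod c)\<^sup>2) ^ n"
        unfolding q_def power_divide[symmetric] using c_nonzero by (simp add: field_simps)
      show ?thesis unfolding denominator q_power C_def using c_nonzero by (simp add: field_simps)
    qed
    finally show ?thesis .
  qed
  show ?thesis
  proof (rule conv_as_L2_of_geometric_increments[OF _ _ integrable_cmod_sq_eigen_martingale_diff bound q])
    show "eigen_martingale n \<in> borel_measurable Pr" for n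
      using integrable_eigen_martingale by auto
    show "integrable Pr (\<lambda>\<omega>. (cmod (eigen_martingale 0 \<omega>))\<^sup>2)"
      using integrable_F_X[OF cmod_sq_CF[OF h_CF], of "[]"] by (simp add: eigen_martingale_def Gen_0)
  qed
qed

end

theorem lemma3p9:
  fixes Pr :: "'w measure" and M :: "'s measure" and P :: "'s \<Rightarrow> ('s \<times> 's) measure"
    and \<nu> \<mu> :: "'s measure" and X :: "bool list \<Rightarrow> 'w \<Rightarrow> 's" and F :: "('s \<Rightarrow> real) set"
    and \<alpha> :: real and J :: "'j set" and alj :: "'j \<Rightarrow> complex"
    and R :: "'j \<Rightarrow> ('s \<Rightarrow> complex) \<Rightarrow> ('s \<Rightarrow> complex)" and \<beta> :: "nat \<Rightarrow> real"
  assumes "BMC Pr M P \<nu> X"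
    and "assmF M P \<nu> F"
    and "assmF3 M P F \<mu> \<alpha> J alj R \<beta>"
    and "1 / sqrt 2 < \<alpha>" and "\<alpha> < 1"
    and "j \<in> J" and "f \<in> F"
  shows "cmartingale Pr (Hfilt Pr M X) (Mnj X alj R j f)
         \<and> (\<exists>Minf. conv_as_L2 Pr (Mnj X alj R j f) Minf)"
proof -
  interpret bmc Pr M P \<nu> X F using assms(1,2) by unfold_locales
  let ?h = "R j (\<lambda>y. complex_of_real (f y))"
  have h: "?h \<in> CF F" by (rule assmF3_R_CF[OF assms(3,6) CF_of_real[OF assms(7)]])
  have c: "cmod (alj j) = \<alpha>" using assmF3_cmod[OF assms(3)] assms(6) by blast
  interpret bmc_eigen Pr M P \<nu> X F ?h "alj j"
    using h assmF3_eigen[OF assms(3,6) CF_of_real[OF assms(7)]] assmF3_alpha_pos[OF assms(3)] c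
    by unfold_locales auto
  have Mnj: "Mnj X alj R j f = eigen_martingale" by (simp add: fun_eq_iff Mnj_def eigen_martingale_def)
  obtain K where K: "\<And>n. (\<integral>x. (Qreal P ^^ n) (\<lambda>x. (cmod (?h x))\<^sup>2) x \<partial>\<nu>) \<le> K"
    using integral_Qreal_iter_bounded[OF assms(3) cmod_sq_CF[OF h]] by blast
  show ?thesis
    unfolding Mnj using cmartingale_eigen_martingale conv_as_L2_eigen_martingale[OF _ K] assms(4) c by simp
qed

end
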